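(* In the smooth setting described in the context (with $u$ convex), let $R_0\ge\|x^0-x^*\|$ and let $\{x^t\}_{t=1}^N$ be generated by the smooth DRAO-S method with stepsizes $$w_t=t,\ \theta_t=\tfrac{t-1}{t},\ \tau_t=\tfrac{t-1}{2},\ \eta_t=\tfrac{2L_f}{t},\quad \Delta>0,\ S_t=\lceil t\Delta M_t\rceil,\ \bar M_t=\tfrac{S_t}{t\Delta},\ \beta_s^t=\tfrac{D_P\bar M_t}{R_0},\ \gamma_s^t=\tfrac{R_0\bar M_t}{D_P},$$ $q_s^t=1$, $\delta_1^t=\bar M_t/\bar M_{t-1}$ if $t\ge2$, $\delta_1^1=1$, and $\delta_s^t=1$ for all $s\ge2$. Then $$f(\bar x^N)-f(x^* )\le\frac{2L_fR_0^2}{N(N+1)}+\frac{2D_PR_0}{N(N+1)\Delta}\quad\forall N\ge1,$$ and there exists a uniform bound $\tilde M$ with $M_t\le\tilde M$ for all $t\ge1$. In addition, if $\Delta=D_P/(L_fR_0)$, then $f(\bar x^N)-f(x^* )\le 4L_fR_0^2/(N(N+1))$ for all $N\ge1$.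
   Context: Problem: $X\subseteq\mathbb{R}^n$ closed convex; $P\subseteq\Delta_m^+=\{p\in\mathbb{R}^m:\sum_ip_i=1,p\ge0\}$ closed convex; $\rho^*$ proper closed convex on $P$; $u$ proper closed convex on $\mathbb{R}^n$. Smooth setting: each $f_i:\mathbb{R}^n\to\mathbb{R}$ convex with Lipschitz continuous gradient, $f_i^*$ its Fenchel conjugate. The problem is $\min_{x\in X}\{f(x):=\max_{p\in P}\sum_ip_if_i(x)-\rho^*(p)+u(x)\}$ with nonempty optimal set and optimal solution $x^*$. $L_p$ is the Lipschitz constant of $\nabla\sum_ip_if_i$ and $L_f=\max_{p\in P}L_p$. $U(\cdot;\cdot)$ is a Bregman distance on $P$ that is 1-strongly convex with respect to a norm $\|\cdot\|_U$ on $\mathbb{R}^m$; $D_P=\max_{p,\bar p\in P}\sqrt{2U(p,\bar p)}$. Smooth DRAO-S method: given $x^0\in X$ and $p_{\rm init}\in P$, set $x^{-1}=\underline{x}^0=x^0$, $y^{1,0}=x^0$, $p^{1,0}=p^{1,-1}=p_{\rm init}$, and for $t\ge2$: $y^{t,0}=y^{t-1,S_{t-1}}$, $p^{t,0}=p^{t-1,S_{t-1}}$, $p^{t,-1}=p^{t-1,S_{t-1}-1}$. Phase $t=1,\dots,N$: $\tilde x^t=x^{t-1}+\theta_t(x^{t-1}-x^{t-2})$; $\underline{x}^t=(\tilde x^t+\tau_t\underline{x}^{t-1})/(1+\tau_t)$; $v_i^t=\nabla f_i(\underline{x}^t)$, $c_i^t=\langle\underline{x}^t,v_i^t\rangle-f_i(\underline{x}^t)$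 ($=f_i^*(v_i^t)$); set $v_i^0:=v_i^1$. Then for $s=1,\dots,S_t$: $\tilde v^{t,s}=\sum_ip_i^{t,s-1}v_i^t+\delta_s^t\sum_i(p_i^{t,s-1}-p_i^{t,s-2})v_i^{t'}$ with $t'=t-1$ if $s=1$ and $t'=t$ if $s\ge2$; $y^{t,s}=\arg\min_{y\in X}\langle y,\tilde v^{t,s}\rangle+u(y)+\frac{\beta_s^t}{2}\|y-y^{t,s-1}\|^2+\frac{\eta_t}{2}\|y-x^{t-1}\|^2$; $p^{t,s}=\arg\max_{p\in P}\sum_ip_i(\langle v_i^t,y^{t,s}\rangle-c_i^t)-\rho^*(p)-\gamma_s^tU(p;p^{t,s-1})$. Then $x^t=\sum_sq_s^ty^{t,s}/\sum_sq_s^t$. Output $\bar x^N=\sum_tw_tx^t/\sum_tw_t$. Also $M_t=\max\{\sum_ip_i\langle v_i^t,y\rangle:p\in\mathbb{R}^m,\|p\|_U\le1,y\in\mathbb{R}^n,\|y\|_2\le1\}$. *)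

theory Defs
  imports "HOL-Analysis.Analysis" "HOL-Library.Extended_Real"
begin

definition eproper_on :: "'a set \<Rightarrow> ('a \<Rightarrow> ereal) \<Rightarrow> bool" where
  "eproper_on S g \<longleftrightarrow> (\<forall>x\<in>S. g x \<noteq> -\<infinity>) \<and> (\<exists>x\<in>S. g x \<noteq> \<infinity>)"

definition econvex_on :: "'a::real_vector set \<Rightarrow> ('a \<Rightarrow> ereal) \<Rightarrow> bool" where
  "econvex_on S g \<longleftrightarrow> convex S \<and>
     (\<forall>x\<in>S. \<forall>y\<in>S. \<forall>t::real. 0 < t \<and> t < 1 \<longrightarrow>
        g ((1 - t) *\<^sub>R x + t *\<^sub>R y) \<le> ereal (1 - t) * g x + ereal t * g y)"

definition eclosed_on :: "'a::topological_space set \<Rightarrow> ('a \<Rightarrow> ereal) \<Rightarrow> bool" where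
  "eclosed_on S g \<longleftrightarrow> closed {(x, r::real). x \<in> S \<and> g x \<le> ereal r}"

definition is_norm :: "('a::real_vector \<Rightarrow> real) \<Rightarrow> bool" where
  "is_norm N \<longleftrightarrow> (\<forall>x. N x = 0 \<longleftrightarrow> x = 0) \<and> (\<forall>x y. N (x + y) \<le> N x + N y)
      \<and> (\<forall>c x. N (c *\<^sub>R x) = \<bar>c\<bar> * N x)"

definition lip_const :: "('a::metric_space \<Rightarrow> 'b::metric_space) \<Rightarrow> real" where
  "lip_const g = Inf {L. L-lipschitz_on UNIV g}"

definition breg :: "('a::real_inner \<Rightarrow> real) \<Rightarrow> ('a \<Rightarrow> 'a) \<Rightarrow> 'a \<Rightarrow> 'a \<Rightarrow> real" where
  "breg \<omega> g\<omega> p q = \<omega> p - \<omega> q - g\<omega> q \<bullet> (p - q)"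

definition prob_simplex :: "(real^'m::finite) set" where
  "prob_simplex = {p. (\<Sum>i\<in>UNIV. p $ i) = 1 \<and> (\<forall>i. 0 \<le> p $ i)}"

definition Mconst :: "(real^'m::finite \<Rightarrow> real) \<Rightarrow> ('m \<Rightarrow> real^'n::finite) \<Rightarrow> real" where
  "Mconst NU V = Sup {(\<Sum>i\<in>UNIV. p $ i * (V i \<bullet> y)) | p y. NU p \<le> 1 \<and> norm y \<le> 1}"

definition fobj :: "(real^'m::finite) set \<Rightarrow> ('m \<Rightarrow> 'a \<Rightarrow> real) \<Rightarrow> (real^'m \<Rightarrow> ereal)
    \<Rightarrow> ('a \<Rightarrow> ereal) \<Rightarrow> 'a \<Rightarrow> ereal" where
  "fobj P f \<rho> u x = (SUP q\<in>P. ereal (\<Sum>i\<in>UNIV. q $ i * f i x) - \<rho> q) + u x"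

end

theory Submission
  imports Defs
begin

(*
  Each inner step of phase t is a Euclidean proximal step in y and a Bregman proximal step in p
  for the saddle function \<langle>p, \<ell>_t(y)\<rangle> - \<rho>*(p) + u(y), where \<ell>_t linearises the f_i at
  the extrapolated point. Their three-point inequalities, together with a bound of the
  extrapolation error by M_t and Young's inequality, show that \<lambda>_t = 1/(\<Delta> Mbar_t) times the gap
  of a step is at most the decrease of a potential. The stepsize \<delta>_t^1 = Mbar_t/Mbar_(t-1) makes
  the potential continuous from one phase to the next, so the weighted gaps of all inner steps
  add up to at most D_P R_0/\<Delta>. Averaging over each phase and the accelerated-gradient estimate
  for the outer linearisations (using cocoercivity of the gradient of \<Sum>_i p_i f_i) turn this
  into N(N+1)/2 (f(xbar_N) - min f) + L_f |x* - x_N|^2 \<le> L_f R_0^2 + D_P R_0/\<Delta>: the rate,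
  and for L_f > 0 bounded outer iterates. For L_f = 0 the weighted average of the inner iterates
  is feasible, so the accumulated gap is nonnegative, which again bounds the iterates. Bounded
  iterates have bounded gradients, hence M_t stays bounded.
*)

lemma product_le_sum_squares:
  fixes k1 k2 c X Y :: real
  assumes "k1 > 0" "c\<^sup>2 \<le> k1 * k2"
  shows "c * X * Y \<le> k1 / 2 * Y\<^sup>2 + k2 / 2 * X\<^sup>2"
proof -
  have "c\<^sup>2 * X\<^sup>2 \<le> k1 * k2 * X\<^sup>2" using assms(2) by (rule mult_right_mono) simp
  moreover have "0 \<le> (k1 * Y - c * X)\<^sup>2" by simp
  ultimately have "0 \<le> k1 * (k1 * Y\<^sup>2 - 2 * (c * X * Y) + k2 * X\<^sup>2)"
    by (simp add: power2_eq_square algebra_simps)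
  then show ?thesis using assms(1) by (simp add: zero_le_mult_iff)
qed

lemma quadratic_le_linear_imp_bounded:
  fixes k a b e :: real
  assumes "k > 0" "0 \<le> b" "k / 2 * e\<^sup>2 \<le> a * e + b"
  shows "e \<le> max 1 (2 * (a + b) / k)"
proof (cases "e \<le> 1")
  case False
  then have "b \<le> b * e" using assms(2) mult_left_mono[of 1 e b] by simp
  then have "k / 2 * e * e \<le> (a + b) * e" using assms(3) by (simp add: power2_eq_square algebra_simps)
  then have "k / 2 * e \<le> a + b" using False by simp
  then have "e \<le> 2 * (a + b) / k" using assms(1) by (simp add: field_simps)
  then show ?thesis by simp
qed simp

lemma sum_lessThan_add_eq_atLeast1_atMost:
  fixes g :: "nat \<Rightarrow> 'a::comm_monoid_add"
  assumes "g 0 = 0"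
  shows "(\<Sum>t<N. g t) + g N = (\<Sum>t=1..N. g t)"
proof -
  have "(\<Sum>t<N. g t) + g N = (\<Sum>t=0..N. g t)"
    by (simp add: atLeast0AtMost lessThan_Suc_atMost[symmetric])
  also have "\<dots> = (\<Sum>t=1..N. g t)"
    using assms by (simp add: sum.atLeast_Suc_atMost)
  finally show ?thesis .
qed

lemma le_limit_at_right_0:
  fixes f :: "real \<Rightarrow> real"
  assumes "(f \<longlongrightarrow> c) (at_right 0)" "\<And>l. 0 < l \<Longrightarrow> l < 1 \<Longrightarrow> a \<le> f l"
  shows "a \<le> c"
proof (rule tendsto_lowerbound[OF assms(1)])
  show "\<forall>\<^sub>F l in at_right 0. a \<le> f l"
    unfolding eventually_at_right[OF zero_less_one] using assms(2) by (intro exI[of _ 1]) auto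
qed simp

lemma norm_convex_combination_power2:
  fixes x y p :: "'a::real_inner"
  shows "(norm ((1 - l) *\<^sub>R x + l *\<^sub>R y - p))\<^sup>2
    = (1 - l) * (norm (x - p))\<^sup>2 + l * (norm (y - p))\<^sup>2 - l * (1 - l) * (norm (y - x))\<^sup>2"
proof -
  have "(1 - l) *\<^sub>R x + l *\<^sub>R y - p = (1 - l) *\<^sub>R (x - p) + l *\<^sub>R (y - p)"
    by (simp add: algebra_simps)
  then show ?thesis
    unfolding power2_norm_eq_inner
    by (simp add: inner_add_left inner_add_right inner_diff_left inner_diff_right inner_commute algebra_simps)
qed

lemma convex_on_dist_power2: "convex_on UNIV (\<lambda>x::'a::real_inner. (norm (x - p))\<^sup>2)"
proof (rule convex_onI)
  fix t :: real and a b :: 'a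
  assume "0 < t" "t < 1"
  then show "(norm ((1 - t) *\<^sub>R a + t *\<^sub>R b - p))\<^sup>2 \<le> (1 - t) * (norm (a - p))\<^sup>2 + t * (norm (b - p))\<^sup>2"
    unfolding norm_convex_combination_power2 by simp
qed simp

section \<open>Norms and the constant M\<close>

lemma is_norm_zero: "is_norm N \<Longrightarrow> N 0 = 0"
  by (simp add: is_norm_def)

lemma is_norm_scaleR: "is_norm N \<Longrightarrow> N (c *\<^sub>R x) = \<bar>c\<bar> * N x"
  by (simp add: is_norm_def)

lemma is_norm_minus_commute: "is_norm N \<Longrightarrow> N (x - y) = N (y - x)"
  using is_norm_scaleR[of N "-1" "x - y"] by simp

lemma is_norm_nonneg:
  assumes "is_norm N"
  shows "0 \<le> N x"
proof -
  have "N (x + - x) \<le> N x + N (-x)"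
    using assms unfolding is_norm_def by blast
  then show ?thesis
    using is_norm_zero[OF assms] is_norm_scaleR[OF assms, of "-1" x] by simp
qed

lemma is_norm_pos: "is_norm N \<Longrightarrow> x \<noteq> 0 \<Longrightarrow> 0 < N x"
  using is_norm_nonneg[of N x] unfolding is_norm_def by fastforce

lemma is_norm_convex:
  assumes "is_norm N"
  shows "convex_on UNIV N"
proof (rule convex_onI)
  fix t :: real and x y
  assume "0 < t" "t < 1"
  have "N ((1 - t) *\<^sub>R x + t *\<^sub>R y) \<le> N ((1 - t) *\<^sub>R x) + N (t *\<^sub>R y)"
    using assms unfolding is_norm_def by blast
  then show "N ((1 - t) *\<^sub>R x + t *\<^sub>R y) \<le> (1 - t) * N x + t * N y"
    using \<open>0 < t\<close> \<open>t < 1\<close> by (simp add: is_norm_scaleR[OF assms])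
qed simp

lemma is_norm_dominates_norm:
  fixes N :: "'a::euclidean_space \<Rightarrow> real"
  assumes "is_norm N"
  obtains C where "C > 0" "\<And>x. norm x \<le> C * N x"
proof -
  have "continuous_on UNIV N"
    by (rule convex_on_continuous) (simp_all add: is_norm_convex[OF assms])
  then have "continuous_on (sphere 0 1) N"
    by (rule continuous_on_subset) simp
  then obtain x0 where x0: "x0 \<in> sphere (0::'a) 1" and min: "\<And>x. x \<in> sphere 0 1 \<Longrightarrow> N x0 \<le> N x"
    using continuous_attains_inf[OF compact_sphere _ \<open>continuous_on (sphere 0 1) N\<close>] by auto
  have pos: "N x0 > 0"
    using x0 by (intro is_norm_pos[OF assms]) auto
  have "norm x \<le> (1 / N x0) * N x" for x
  proof (cases "x = 0")
    case True
    then show ?thesis using is_norm_zero[OF assms] by simp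
  next
    case False
    then have "N x0 \<le> N ((1 / norm x) *\<^sub>R x)" by (intro min) simp
    also have "\<dots> = N x / norm x" using is_norm_scaleR[OF assms] by simp
    finally show ?thesis using pos False by (simp add: field_simps)
  qed
  with pos show ?thesis by (intro that[of "1 / N x0"]) auto
qed

lemma Mconst_term_bound:
  fixes N :: "real^'m::finite \<Rightarrow> real" and V :: "'m \<Rightarrow> real^'n::finite"
  assumes C: "\<And>p. norm p \<le> C * N p" "0 \<le> C" and p: "N p \<le> 1" and y: "norm y \<le> 1"
  shows "(\<Sum>i\<in>UNIV. p $ i * (V i \<bullet> y)) \<le> C * (\<Sum>i\<in>UNIV. norm (V i))"
proof -
  have "p $ i * (V i \<bullet> y) \<le> C * norm (V i)" for i
  proof -
    have "C * N p \<le> C" using C(2) p by (simp add: mult_left_le)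
    then have pi: "\<bar>p $ i\<bar> \<le> C" using component_le_norm_cart[of p i] C(1)[of p] by linarith
    have "\<bar>V i \<bullet> y\<bar> \<le> norm (V i)"
      using Cauchy_Schwarz_ineq2[of "V i" y] mult_left_le[OF y norm_ge_zero[of "V i"]] by linarith
    then have "\<bar>p $ i\<bar> * \<bar>V i \<bullet> y\<bar> \<le> C * norm (V i)" using pi by (intro mult_mono) auto
    then show ?thesis by (simp add: abs_mult[symmetric])
  qed
  then show ?thesis by (simp add: sum_distrib_left sum_mono)
qed

lemma Mconst_upper:
  fixes N :: "real^'m::finite \<Rightarrow> real" and V :: "'m \<Rightarrow> real^'n::finite"
  assumes "is_norm N" "N p \<le> 1" "norm y \<le> 1"
  shows "(\<Sum>i\<in>UNIV. p $ i * (V i \<bullet> y)) \<le> Mconst N V"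
proof -
  obtain C where C: "C > 0" "\<And>p. norm p \<le> C * N p"
    using is_norm_dominates_norm[OF assms(1)] by blast
  have "bdd_above {(\<Sum>i\<in>UNIV. p $ i * (V i \<bullet> y)) | p y. N p \<le> 1 \<and> norm y \<le> 1}"
  proof (rule bdd_aboveI)
    fix r assume "r \<in> {(\<Sum>i\<in>UNIV. p $ i * (V i \<bullet> y)) | p y. N p \<le> 1 \<and> norm y \<le> 1}"
    then obtain p' y' where "r = (\<Sum>i\<in>UNIV. p' $ i * (V i \<bullet> y'))" "N p' \<le> 1" "norm y' \<le> 1"
      by blast
    then show "r \<le> C * (\<Sum>i\<in>UNIV. norm (V i))"
      using Mconst_term_bound[OF C(2)] C(1) by simp
  qed
  moreover have "(\<Sum>i\<in>UNIV. p $ i * (V i \<bullet> y)) \<in> {(\<Sum>i\<in>UNIV. p $ i * (V i \<bullet> y)) | p y. N p \<le> 1 \<and> norm y \<le> 1}"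
    using assms(2,3) by blast
  ultimately show ?thesis
    unfolding Mconst_def by (rule cSup_upper[rotated])
qed

lemma Mconst_le_sum_norm:
  fixes N :: "real^'m::finite \<Rightarrow> real"
  assumes "is_norm N"
  obtains C where "0 \<le> C" "\<And>V :: 'm \<Rightarrow> real^'n::finite. Mconst N V \<le> C * (\<Sum>i\<in>UNIV. norm (V i))"
proof -
  obtain C where C: "C > 0" "\<And>p. norm p \<le> C * N p"
    using is_norm_dominates_norm[OF assms] by blast
  have bound: "Mconst N V \<le> C * (\<Sum>i\<in>UNIV. norm (V i))" for V :: "'m \<Rightarrow> real^'n"
    unfolding Mconst_def
  proof (rule cSup_least)
    have "N 0 \<le> 1" "norm (0::real^'n) \<le> 1" using is_norm_zero[OF assms] by simp_all
    then show "{(\<Sum>i\<in>UNIV. p $ i * (V i \<bullet> y)) | p y. N p \<le> 1 \<and> norm y \<le> 1} \<noteq> {}"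
      by blast
    fix r assume "r \<in> {(\<Sum>i\<in>UNIV. p $ i * (V i \<bullet> y)) | p y. N p \<le> 1 \<and> norm y \<le> 1}"
    then obtain p y where "r = (\<Sum>i\<in>UNIV. p $ i * (V i \<bullet> y))" "N p \<le> 1" "norm y \<le> 1"
      by blast
    then show "r \<le> C * (\<Sum>i\<in>UNIV. norm (V i))"
      using Mconst_term_bound[OF C(2)] C(1) by simp
  qed
  show ?thesis by (rule that[OF _ bound]) (use C(1) in simp)
qed

lemma Mconst_bilinear:
  fixes N :: "real^'m::finite \<Rightarrow> real" and V :: "'m \<Rightarrow> real^'n::finite"
  assumes "is_norm N"
  shows "(\<Sum>i\<in>UNIV. d $ i * (V i \<bullet> y)) \<le> Mconst N V * N d * norm y"
proof (cases "d = 0 \<or> y = 0")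
  case True
  then show ?thesis using is_norm_zero[OF assms] by auto
next
  case False
  then have nd: "N d > 0" and ny: "norm y > 0" using is_norm_pos[OF assms] by auto
  let ?p = "(1 / N d) *\<^sub>R d" and ?y = "(1 / norm y) *\<^sub>R y"
  have "(\<Sum>i\<in>UNIV. ?p $ i * (V i \<bullet> ?y)) \<le> Mconst N V"
    using nd ny by (intro Mconst_upper[OF assms]) (simp_all add: is_norm_scaleR[OF assms])
  moreover have "(\<Sum>i\<in>UNIV. ?p $ i * (V i \<bullet> ?y)) = (\<Sum>i\<in>UNIV. d $ i * (V i \<bullet> y)) / (N d * norm y)"
    by (simp add: sum_divide_distrib)
  ultimately show ?thesis using nd ny by (simp add: pos_divide_le_eq mult.assoc)
qed

section \<open>Convex functions with Lipschitz gradient\<close>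

lemma has_field_derivative_along_line:
  fixes F :: "'a::real_inner \<Rightarrow> real"
  assumes "(F has_derivative (\<lambda>h. g \<bullet> h)) (at (y + s *\<^sub>R d) within (\<lambda>s. y + s *\<^sub>R d) ` T)"
  shows "((\<lambda>s. F (y + s *\<^sub>R d)) has_field_derivative g \<bullet> d) (at s within T)"
proof -
  have "((\<lambda>s. y + s *\<^sub>R d) has_derivative (\<lambda>s. s *\<^sub>R d)) (at s within T)"
    by (auto intro!: derivative_eq_intros)
  from has_derivative_in_compose[OF this assms]
  have "((\<lambda>s. F (y + s *\<^sub>R d)) has_derivative (\<lambda>r. g \<bullet> (r *\<^sub>R d))) (at s within T)"
    by simp
  moreover have "(\<lambda>r. g \<bullet> (r *\<^sub>R d)) = (*) (g \<bullet> d)"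
    by (auto simp: mult.commute)
  ultimately show ?thesis by (simp add: has_field_derivative_def)
qed

lemma convex_on_along_line:
  fixes F :: "'a::real_vector \<Rightarrow> real"
  assumes "convex_on UNIV F"
  shows "convex_on UNIV (\<lambda>s::real. F (y + s *\<^sub>R d))"
proof (rule convex_onI)
  fix t a b :: real
  assume "0 < t" "t < 1"
  moreover have "y + ((1 - t) * a + t * b) *\<^sub>R d = (1 - t) *\<^sub>R (y + a *\<^sub>R d) + t *\<^sub>R (y + b *\<^sub>R d)"
    by (simp add: algebra_simps)
  ultimately show "F (y + ((1 - t) *\<^sub>R a + t *\<^sub>R b) *\<^sub>R d) \<le> (1 - t) * F (y + a *\<^sub>R d) + t * F (y + b *\<^sub>R d)"
    using convex_onD[OF assms, of t "y + a *\<^sub>R d" "y + b *\<^sub>R d"] by simp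
qed simp

lemma convex_gradient_inequality:
  fixes F :: "'a::real_inner \<Rightarrow> real"
  assumes "convex_on UNIV F" "\<And>z. (F has_derivative (\<lambda>h. G z \<bullet> h)) (at z)"
  shows "F y + G y \<bullet> (x - y) \<le> F x"
proof -
  have "((\<lambda>s. F (y + s *\<^sub>R (x - y))) has_field_derivative G y \<bullet> (x - y)) (at 0 within UNIV)"
    using assms(2)[of y] by (intro has_field_derivative_along_line) (auto intro: has_derivative_at_withinI)
  from convex_on_imp_above_tangent[OF convex_on_along_line[OF assms(1)] _ _ _ this, where x = 1]
  show ?thesis by simp
qed

lemma lipschitz_gradient_descent:
  fixes F :: "'a::real_inner \<Rightarrow> real"
  assumes "\<And>z. (F has_derivative (\<lambda>h. G z \<bullet> h)) (at z)" "L-lipschitz_on UNIV G"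
  shows "F x \<le> F y + G y \<bullet> (x - y) + L / 2 * (norm (x - y))\<^sup>2"
proof -
  define d where "d = x - y"
  let ?k = "\<lambda>s. F (y + s *\<^sub>R d) - s * (G y \<bullet> d) - L / 2 * s\<^sup>2 * (norm d)\<^sup>2"
  have "?k 1 \<le> ?k 0"
  proof (rule DERIV_nonpos_imp_nonincreasing[of 0 1])
    fix s :: real assume s: "0 \<le> s" "s \<le> 1"
    have "((\<lambda>s. F (y + s *\<^sub>R d)) has_field_derivative G (y + s *\<^sub>R d) \<bullet> d) (at s)"
      using assms(1) by (intro has_field_derivative_along_line) (auto intro: has_derivative_at_withinI)
    then have D: "(?k has_real_derivative (G (y + s *\<^sub>R d) - G y) \<bullet> d - L * s * (norm d)\<^sup>2) (at s)"
      by (auto intro!: derivative_eq_intros simp: power2_eq_square inner_diff_left)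
    have "(G (y + s *\<^sub>R d) - G y) \<bullet> d \<le> norm (G (y + s *\<^sub>R d) - G y) * norm d"
      by (rule norm_cauchy_schwarz)
    also have "\<dots> \<le> L * norm (s *\<^sub>R d) * norm d"
      using lipschitz_onD[OF assms(2), of "y + s *\<^sub>R d" y] by (simp add: dist_norm mult_right_mono)
    also have "\<dots> = L * s * (norm d)\<^sup>2" using s by (simp add: power2_eq_square)
    finally show "\<exists>D. (?k has_real_derivative D) (at s) \<and> D \<le> 0" using D by auto
  qed simp
  then show ?thesis by (simp add: d_def)
qed

lemma lipschitz_gradient_cocoercive:
  fixes F :: "'a::real_inner \<Rightarrow> real"
  assumes "convex_on UNIV F" "\<And>z. (F has_derivative (\<lambda>h. G z \<bullet> h)) (at z)" "L-lipschitz_on UNIV G"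
  shows "(norm (G x - G y))\<^sup>2 \<le> 2 * L * breg F G x y"
proof (cases "L = 0")
  case True
  then show ?thesis using lipschitz_onD[OF assms(3), of x y] by simp
next
  case False
  then have L: "L > 0" using lipschitz_on_nonneg[OF assms(3)] by simp
  define g where "g = G x - G y"
  define w where "w = x - (1 / L) *\<^sub>R g"
  \<comment> \<open>Compare the lower tangent bound at y with the upper quadratic bound at x, both at the
      gradient step w from x.\<close>
  have "F y + G y \<bullet> (w - y) \<le> F w" by (rule convex_gradient_inequality[OF assms(1,2)])
  moreover have "F w \<le> F x + G x \<bullet> (w - x) + L / 2 * (norm (w - x))\<^sup>2"
    by (rule lipschitz_gradient_descent[OF assms(2,3)])
  moreover have "G y \<bullet> (w - y) = G y \<bullet> (x - y) - (G y \<bullet> g) / L"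
    by (simp add: w_def inner_diff_right)
  moreover have "G x \<bullet> (w - x) = - (G x \<bullet> g) / L" by (simp add: w_def)
  moreover have "(norm (w - x))\<^sup>2 = (norm g)\<^sup>2 / L\<^sup>2" using L by (simp add: w_def power_divide)
  moreover have "G x \<bullet> g - G y \<bullet> g = (norm g)\<^sup>2"
    by (simp add: g_def inner_diff_left[symmetric] power2_norm_eq_inner)
  ultimately have "(norm g)\<^sup>2 / L - (norm g)\<^sup>2 / (2 * L) \<le> F x - F y - G y \<bullet> (x - y)"
    using L by (simp add: power2_eq_square field_simps)
  then show ?thesis using L by (simp add: g_def breg_def field_simps)
qed

lemma lipschitz_gradient_cross_bound:
  fixes F :: "'a::real_inner \<Rightarrow> real"
  assumes "convex_on UNIV F" "\<And>z. (F has_derivative (\<lambda>h. G z \<bullet> h)) (at z)" "L-lipschitz_on UNIV G"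
    and "0 \<le> k"
  shows "k * (d \<bullet> (G a - G b)) \<le> L * (norm d)\<^sup>2 + k\<^sup>2 / 2 * breg F G b a"
proof -
  define D where "D = breg F G b a"
  have D: "0 \<le> D" using convex_gradient_inequality[OF assms(1,2), of a b] by (simp add: D_def breg_def)
  have coc: "(norm (G b - G a))\<^sup>2 \<le> 2 * L * D"
    unfolding D_def by (rule lipschitz_gradient_cocoercive[OF assms(1-3)])
  have "k * (d \<bullet> (G a - G b)) \<le> k * norm d * norm (G b - G a)"
    using norm_cauchy_schwarz[of d "G a - G b"] assms(4)
    by (simp add: norm_minus_commute mult_left_mono mult.assoc)
  also have "\<dots> \<le> L * (norm d)\<^sup>2 + k\<^sup>2 / 2 * D"
  proof (cases "L = 0")
    case True
    then show ?thesis using coc D by simp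
  next
    case False
    then have L: "L > 0" using lipschitz_on_nonneg[OF assms(3)] by simp
    have "k * norm (G b - G a) * norm d \<le> 2 * L / 2 * (norm d)\<^sup>2 + k\<^sup>2 / (2 * L) / 2 * (norm (G b - G a))\<^sup>2"
      using L by (intro product_le_sum_squares) (simp_all add: power2_eq_square)
    then have "k * norm d * norm (G b - G a) \<le> L * (norm d)\<^sup>2 + k\<^sup>2 / (2 * L) / 2 * (norm (G b - G a))\<^sup>2"
      by (simp add: mult.commute mult.left_commute)
    also have "k\<^sup>2 / (2 * L) / 2 * (norm (G b - G a))\<^sup>2 \<le> k\<^sup>2 / (2 * L) / 2 * (2 * L * D)"
      using coc L by (intro mult_left_mono) auto
    finally show ?thesis using L by (simp add: field_simps)
  qed
  finally show ?thesis unfolding D_def .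
qed

lemma extrapolated_linearization_identity:
  fixes a x xt l l' ga g :: "'a::real_inner"
  assumes "(1 + \<tau>) *\<^sub>R l = xt + \<tau> *\<^sub>R l'"
  shows "Fa + ga \<bullet> (x - a) - (Fl + g \<bullet> (x - l))
    = \<tau> * (Fl' - Fa - ga \<bullet> (l' - a)) - (1 + \<tau>) * (Fl - Fa - ga \<bullet> (l - a))
      - \<tau> * (Fl' - Fl - g \<bullet> (l' - l)) + (x - xt) \<bullet> (ga - g)"
proof -
  have xt: "xt = (1 + \<tau>) *\<^sub>R l - \<tau> *\<^sub>R l'" using assms by (simp add: algebra_simps)
  show ?thesis unfolding xt
    by (simp add: inner_diff_left inner_diff_right inner_add_left inner_add_right inner_commute algebra_simps)
qed

lemma lip_const_le:
  assumes "L-lipschitz_on UNIV g"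
  shows "lip_const g \<le> L"
  unfolding lip_const_def
  by (rule cInf_lower) (use assms in \<open>auto intro: bdd_belowI[of _ 0] dest: lipschitz_on_nonneg\<close>)

lemma lip_const_lipschitz:
  assumes "L-lipschitz_on UNIV g"
  shows "(lip_const g)-lipschitz_on UNIV g"
proof (rule lipschitz_onI)
  have ne: "{L. L-lipschitz_on UNIV g} \<noteq> {}" using assms by blast
  show "0 \<le> lip_const g"
    unfolding lip_const_def by (rule cInf_greatest[OF ne]) (auto dest: lipschitz_on_nonneg)
  fix a b
  show "dist (g a) (g b) \<le> lip_const g * dist a b"
  proof (cases "a = b")
    case False
    then have d: "dist a b > 0" by simp
    have "dist (g a) (g b) / dist a b \<le> lip_const g"
      unfolding lip_const_def
    proof (rule cInf_greatest[OF ne])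
      fix L' assume "L' \<in> {L. L-lipschitz_on UNIV g}"
      then show "dist (g a) (g b) / dist a b \<le> L'"
        using d lipschitz_onD[of L' UNIV g a b] by (simp add: divide_le_eq)
    qed
    then show ?thesis using d by (simp add: divide_le_eq)
  qed simp
qed

section \<open>Extended-real convex functions and proximal steps\<close>

lemma econvex_onD_real:
  assumes "econvex_on S g" "x \<in> S" "y \<in> S" "g x = ereal gx" "g y = ereal gy" "0 < t" "t < 1"
  shows "g ((1 - t) *\<^sub>R x + t *\<^sub>R y) \<le> ereal ((1 - t) * gx + t * gy)"
  using assms unfolding econvex_on_def by (metis times_ereal.simps(1) plus_ereal.simps(1))

lemma econvex_on_finite_part:
  fixes g :: "'a::real_vector \<Rightarrow> ereal"
  assumes "econvex_on UNIV g" "\<And>x. g x \<noteq> -\<infinity>"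
  shows "convex {x. g x \<noteq> \<infinity>}" "convex_on {x. g x \<noteq> \<infinity>} (\<lambda>x. real_of_ereal (g x))"
proof -
  have g_le: "g ((1 - t) *\<^sub>R a + t *\<^sub>R b) \<le> ereal ((1 - t) * real_of_ereal (g a) + t * real_of_ereal (g b))"
    if "g a \<noteq> \<infinity>" "g b \<noteq> \<infinity>" "0 < t" "t < 1" for a b t
    using that assms(2)[of a] assms(2)[of b]
    by (intro econvex_onD_real[OF assms(1)]) (auto intro: real_of_ereal.elims)
  show cv: "convex {x. g x \<noteq> \<infinity>}"
  proof (rule convexI)
    fix a b :: 'a and s t :: real
    assume "a \<in> {x. g x \<noteq> \<infinity>}" "b \<in> {x. g x \<noteq> \<infinity>}" "0 \<le> s" "0 \<le> t" "s + t = 1"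
    then show "s *\<^sub>R a + t *\<^sub>R b \<in> {x. g x \<noteq> \<infinity>}"
      using g_le[of a b t] by (cases "t = 0 \<or> t = 1") (auto simp: eq_diff_eq[symmetric])
  qed
  show "convex_on {x. g x \<noteq> \<infinity>} (\<lambda>x. real_of_ereal (g x))"
  proof (rule convex_onI)
    fix t :: real and a b
    assume "0 < t" "t < 1" "a \<in> {x. g x \<noteq> \<infinity>}" "b \<in> {x. g x \<noteq> \<infinity>}"
    then show "real_of_ereal (g ((1 - t) *\<^sub>R a + t *\<^sub>R b)) \<le> (1 - t) * real_of_ereal (g a) + t * real_of_ereal (g b)"
      using g_le[of a b t] assms(2)[of "(1 - t) *\<^sub>R a + t *\<^sub>R b"]
      by (cases "g ((1 - t) *\<^sub>R a + t *\<^sub>R b)") auto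
  qed (rule cv)
qed

lemma econvex_jensen:
  fixes g :: "'a::real_vector \<Rightarrow> ereal"
  assumes "econvex_on UNIV g" "\<And>x. g x \<noteq> -\<infinity>"
    and "finite I" "I \<noteq> {}" "\<And>i. i \<in> I \<Longrightarrow> 0 \<le> a i" "(\<Sum>i\<in>I. a i) = 1"
    and r: "\<And>i. i \<in> I \<Longrightarrow> g (z i) = ereal (r i)"
  obtains s where "g (\<Sum>i\<in>I. a i *\<^sub>R z i) = ereal s" "s \<le> (\<Sum>i\<in>I. a i * r i)"
proof -
  note dom = econvex_on_finite_part[OF assms(1,2)]
  have z: "z i \<in> {x. g x \<noteq> \<infinity>}" if "i \<in> I" for i using r[OF that] by simp
  have mem: "(\<Sum>i\<in>I. a i *\<^sub>R z i) \<in> {x. g x \<noteq> \<infinity>}"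
    by (rule convex_sum[OF assms(3) dom(1) assms(6,5) z])
  have "real_of_ereal (g (\<Sum>i\<in>I. a i *\<^sub>R z i)) \<le> (\<Sum>i\<in>I. a i * real_of_ereal (g (z i)))"
    by (rule convex_on_sum[OF assms(3,4) dom(2) assms(6,5) z])
  also have "\<dots> = (\<Sum>i\<in>I. a i * r i)" using r by simp
  finally show ?thesis
    using mem assms(2)[of "\<Sum>i\<in>I. a i *\<^sub>R z i"]
    by (intro that[of "real_of_ereal (g (\<Sum>i\<in>I. a i *\<^sub>R z i))"]) (auto intro: real_of_ereal.elims)
qed

lemma prox_three_point:
  fixes X :: "'a::real_inner set" and u :: "'a \<Rightarrow> ereal"
  assumes "convex X" "econvex_on UNIV u" "\<And>x. u x \<noteq> -\<infinity>"
    and "y \<in> X" "z \<in> X" "u z = ereal uz"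
    and opt: "\<forall>w\<in>X. ereal (y \<bullet> v) + u y + ereal (\<beta> / 2 * (norm (y - a))\<^sup>2 + \<eta> / 2 * (norm (y - b))\<^sup>2)
          \<le> ereal (w \<bullet> v) + u w + ereal (\<beta> / 2 * (norm (w - a))\<^sup>2 + \<eta> / 2 * (norm (w - b))\<^sup>2)"
  obtains uy where "u y = ereal uy"
    "(y - z) \<bullet> v + uy - uz + \<beta> / 2 * (norm (y - a))\<^sup>2 + \<eta> / 2 * (norm (y - b))\<^sup>2
       + (\<beta> + \<eta>) / 2 * (norm (z - y))\<^sup>2 \<le> \<beta> / 2 * (norm (z - a))\<^sup>2 + \<eta> / 2 * (norm (z - b))\<^sup>2"
proof -
  define \<beta>' \<eta>' where "\<beta>' = \<beta> / 2" and "\<eta>' = \<eta> / 2"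
  define \<Psi> where "\<Psi> w r = w \<bullet> v + r + \<beta>' * (norm (w - a))\<^sup>2 + \<eta>' * (norm (w - b))\<^sup>2" for w r
  define E where "E = (\<beta>' + \<eta>') * (norm (z - y))\<^sup>2"
  have "u y \<noteq> \<infinity>"
  proof
    assume "u y = \<infinity>"
    then show False using bspec[OF opt assms(5)] assms(6) by simp
  qed
  then obtain uy where uy: "u y = ereal uy" using assms(3)[of y] by (cases "u y") auto
  \<comment> \<open>Optimality against the points of the segment from y to z, on which the quadratic part of
      the objective is strictly convex.\<close>
  have "\<Psi> y uy \<le> \<Psi> z uz - (1 - l) * E" if l: "0 < l" "l < 1" for l
  proof -
    define w where "w = (1 - l) *\<^sub>R y + l *\<^sub>R z"
    have "w \<in> X" using assms(1,4,5) l unfolding w_def by (simp add: convex_def)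
    have "u w \<le> ereal ((1 - l) * uy + l * uz)"
      unfolding w_def by (rule econvex_onD_real[OF assms(2) _ _ uy assms(6) l]) simp_all
    then obtain uw where uw: "u w = ereal uw" "uw \<le> (1 - l) * uy + l * uz"
      using assms(3)[of w] by (cases "u w") auto
    have "\<Psi> y uy \<le> \<Psi> w uw"
      using bspec[OF opt \<open>w \<in> X\<close>] uy uw(1) unfolding \<Psi>_def \<beta>'_def \<eta>'_def by (simp add: add.assoc)
    also have "\<dots> \<le> \<Psi> w ((1 - l) * uy + l * uz)"
      using uw(2) unfolding \<Psi>_def by simp
    also have "\<dots> = (1 - l) * \<Psi> y uy + l * \<Psi> z uz - l * (1 - l) * E"
      unfolding \<Psi>_def E_def w_def norm_convex_combination_power2 by (simp add: inner_add_left algebra_simps)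
    finally have "l * \<Psi> y uy \<le> l * (\<Psi> z uz - (1 - l) * E)" by (simp add: algebra_simps)
    then show ?thesis using l(1) by (simp add: mult_le_cancel_left_pos)
  qed
  moreover have "((\<lambda>l. \<Psi> z uz - (1 - l) * E) \<longlongrightarrow> \<Psi> z uz - (1 - 0) * E) (at_right 0)"
    by (intro tendsto_intros)
  ultimately have "\<Psi> y uy \<le> \<Psi> z uz - (1 - 0) * E"
    by (rule le_limit_at_right_0[rotated])
  then show ?thesis
    using uy by (intro that) (simp_all add: \<Psi>_def E_def \<beta>'_def \<eta>'_def inner_diff_left algebra_simps add_divide_distrib)
qed

lemma breg_three_point:
  "breg \<omega> g q p0 - breg \<omega> g q p - breg \<omega> g p p0 = (g p - g p0) \<bullet> (q - p)"
  by (simp add: breg_def inner_diff_left inner_diff_right algebra_simps)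

lemma bregman_prox_segment:
  fixes P :: "(real^'m::finite) set" and \<rho> :: "real^'m \<Rightarrow> ereal" and h :: "'m \<Rightarrow> real"
  defines "H p \<equiv> (\<Sum>i\<in>UNIV. p $ i * h i)"
  assumes "convex P" "econvex_on P \<rho>" "\<forall>q\<in>P. \<rho> q \<noteq> -\<infinity>"
    and ps: "ps \<in> P" "\<rho> ps = ereal rp" and q: "q \<in> P" "\<rho> q = ereal rq" and l: "0 < l" "l < 1"
    and opt: "\<forall>q\<in>P. ereal (H q) - \<rho> q - ereal (\<gamma> * breg \<omega> g\<omega> q p0)
                \<le> ereal (H ps) - \<rho> ps - ereal (\<gamma> * breg \<omega> g\<omega> ps p0)"
  shows "l * (H q - H ps - rq + rp + \<gamma> * (g\<omega> p0 \<bullet> (q - ps)))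
    \<le> \<gamma> * (\<omega> (ps + l *\<^sub>R (q - ps)) - \<omega> ps)"
proof -
  define ql where "ql = (1 - l) *\<^sub>R ps + l *\<^sub>R q"
  have seg: "ps + l *\<^sub>R (q - ps) = ql" unfolding ql_def by (simp add: algebra_simps)
  have ql_P: "ql \<in> P" unfolding ql_def using assms(2) ps(1) q(1) l by (simp add: convex_def)
  have "\<rho> ql \<le> ereal ((1 - l) * rp + l * rq)"
    unfolding ql_def by (rule econvex_onD_real[OF assms(3) ps(1) q(1) ps(2) q(2) l])
  then obtain r where r: "\<rho> ql = ereal r" "r \<le> rp - l * rp + l * rq"
    using assms(4) ql_P by (cases "\<rho> ql") (auto simp: algebra_simps)
  have "H ql = (\<Sum>i\<in>UNIV. (1 - l) * (ps $ i * h i) + l * (q $ i * h i))"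
    unfolding ql_def H_def by (rule sum.cong) (simp_all add: algebra_simps)
  also have "\<dots> = (1 - l) * H ps + l * H q"
    unfolding H_def by (simp add: sum.distrib sum_distrib_left)
  finally have "H ql = H ps - l * H ps + l * H q" by (simp add: algebra_simps)
  moreover have "H ql - r - \<gamma> * breg \<omega> g\<omega> ql p0 \<le> H ps - rp - \<gamma> * breg \<omega> g\<omega> ps p0"
    using bspec[OF opt ql_P] ps(2) r(1) by simp
  moreover have "\<gamma> * breg \<omega> g\<omega> ql p0 - \<gamma> * breg \<omega> g\<omega> ps p0
      = \<gamma> * (\<omega> ql - \<omega> ps) - l * (\<gamma> * (g\<omega> p0 \<bullet> (q - ps)))"
    unfolding breg_def seg[symmetric] by (simp add: inner_diff_right algebra_simps)
  moreover have "l * (H q - H ps - rq + rp + \<gamma> * (g\<omega> p0 \<bullet> (q - ps)))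
      = l * H q - l * H ps - l * rq + l * rp + l * (\<gamma> * (g\<omega> p0 \<bullet> (q - ps)))"
    by (simp add: algebra_simps)
  ultimately show ?thesis unfolding seg using r(2) by linarith
qed

lemma bregman_prox_three_point:
  fixes P :: "(real^'m::finite) set" and \<rho> :: "real^'m \<Rightarrow> ereal" and h :: "'m \<Rightarrow> real"
  assumes "convex P" "econvex_on P \<rho>" "\<forall>q\<in>P. \<rho> q \<noteq> -\<infinity>"
    and \<omega>: "(\<omega> has_derivative (\<lambda>h. g\<omega> ps \<bullet> h)) (at ps within P)"
    and ps: "ps \<in> P" and q: "q \<in> P" "\<rho> q = ereal rq"
    and opt: "\<forall>q\<in>P. ereal (\<Sum>i\<in>UNIV. q $ i * h i) - \<rho> q - ereal (\<gamma> * breg \<omega> g\<omega> q p0)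
                \<le> ereal (\<Sum>i\<in>UNIV. ps $ i * h i) - \<rho> ps - ereal (\<gamma> * breg \<omega> g\<omega> ps p0)"
  obtains rp where "\<rho> ps = ereal rp"
    "(\<Sum>i\<in>UNIV. q $ i * h i) - rq - ((\<Sum>i\<in>UNIV. ps $ i * h i) - rp)
       \<le> \<gamma> * (breg \<omega> g\<omega> q p0 - breg \<omega> g\<omega> q ps - breg \<omega> g\<omega> ps p0)"
proof -
  define H where "H p = (\<Sum>i\<in>UNIV. p $ i * h i)" for p :: "real^'m"
  define \<phi> where "\<phi> l = \<gamma> * \<omega> (ps + l *\<^sub>R (q - ps))" for l
  have "\<rho> ps \<noteq> \<infinity>"
  proof
    assume "\<rho> ps = \<infinity>"
    then show False using bspec[OF opt q(1)] q(2) by simp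
  qed
  then obtain rp where rp: "\<rho> ps = ereal rp" using assms(3) ps by (cases "\<rho> ps") auto
  have "ps + l *\<^sub>R (q - ps) \<in> P" if "0 \<le> l" "l \<le> 1" for l
    using assms(1) ps q that convexD[of P ps q "1 - l" l] by (simp add: algebra_simps)
  then have "((\<lambda>l. \<omega> (ps + l *\<^sub>R (q - ps))) has_field_derivative g\<omega> ps \<bullet> (q - ps)) (at 0 within {0..1})"
    by (intro has_field_derivative_along_line) (auto intro: has_derivative_subset[OF \<omega>])
  then have "(\<phi> has_field_derivative \<gamma> * (g\<omega> ps \<bullet> (q - ps))) (at 0 within {0..1})"
    unfolding \<phi>_def by (rule DERIV_cmult)
  then have "((\<lambda>l. (\<phi> l - \<phi> 0) / (l - 0)) \<longlongrightarrow> \<gamma> * (g\<omega> ps \<bullet> (q - ps))) (at_right 0)"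
    unfolding has_field_derivative_iff at_within_Icc_at_right[OF zero_less_one] .
  moreover have "H q - H ps - rq + rp + \<gamma> * (g\<omega> p0 \<bullet> (q - ps)) \<le> (\<phi> l - \<phi> 0) / (l - 0)"
    if "0 < l" "l < 1" for l
    using bregman_prox_segment[OF assms(1-3) ps rp q that opt] that
    unfolding \<phi>_def H_def by (simp add: field_simps mult.commute right_diff_distrib)
  ultimately have "H q - H ps - rq + rp + \<gamma> * (g\<omega> p0 \<bullet> (q - ps)) \<le> \<gamma> * (g\<omega> ps \<bullet> (q - ps))"
    by (rule le_limit_at_right_0)
  moreover have "\<gamma> * (breg \<omega> g\<omega> q p0 - breg \<omega> g\<omega> q ps - breg \<omega> g\<omega> ps p0)
      = \<gamma> * (g\<omega> ps \<bullet> (q - ps)) - \<gamma> * (g\<omega> p0 \<bullet> (q - ps))"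
    unfolding breg_three_point by (simp add: inner_diff_left algebra_simps)
  ultimately have "H q - rq - (H ps - rp) \<le> \<gamma> * (breg \<omega> g\<omega> q p0 - breg \<omega> g\<omega> q ps - breg \<omega> g\<omega> ps p0)"
    by linarith
  with rp show ?thesis unfolding H_def by (rule that)
qed

section \<open>The saddle-point problem\<close>

locale smooth_minimax =
  fixes X :: "(real^'n::finite) set"
    and P :: "(real^'m::finite) set"
    and \<rho> :: "real^'m \<Rightarrow> ereal"
    and u :: "real^'n \<Rightarrow> ereal"
    and f :: "'m \<Rightarrow> real^'n \<Rightarrow> real"
    and fg :: "'m \<Rightarrow> real^'n \<Rightarrow> real^'n"
    and Lf :: real
    and xstar :: "real^'n"
  assumes X_convex: "convex X"
    and P_convex: "convex P" and P_simplex: "P \<subseteq> prob_simplex"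
    and \<rho>_proper: "eproper_on P \<rho>" and \<rho>_convex: "econvex_on P \<rho>"
    and u_proper: "eproper_on UNIV u" and u_convex: "econvex_on UNIV u"
    and f_convex: "\<And>i. convex_on UNIV (f i)"
    and f_grad: "\<And>i z. (f i has_derivative (\<lambda>h. fg i z \<bullet> h)) (at z)"
    and f_lip: "\<And>i. \<exists>L. L-lipschitz_on UNIV (fg i)"
    and Lf_def: "Lf = Sup ((\<lambda>q. lip_const (\<lambda>z. \<Sum>i\<in>UNIV. (q $ i) *\<^sub>R fg i z)) ` P)"
    and xstar_in: "xstar \<in> X"
    and xstar_opt: "\<And>z. z \<in> X \<Longrightarrow> fobj P f \<rho> u xstar \<le> fobj P f \<rho> u z"
    and fstar_fin: "fobj P f \<rho> u xstar < \<infinity>"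
begin

definition F :: "real^'m \<Rightarrow> real^'n \<Rightarrow> real" where
  "F q z = (\<Sum>i\<in>UNIV. q $ i * f i z)"

definition gradF :: "real^'m \<Rightarrow> real^'n \<Rightarrow> real^'n" where
  "gradF q z = (\<Sum>i\<in>UNIV. q $ i *\<^sub>R fg i z)"

lemma P_nonneg: "q \<in> P \<Longrightarrow> 0 \<le> q $ i"
  using P_simplex unfolding prob_simplex_def by auto

lemma P_le_1: "q \<in> P \<Longrightarrow> q $ i \<le> 1"
  using P_simplex member_le_sum[of i UNIV "\<lambda>i. q $ i"] P_nonneg unfolding prob_simplex_def by auto

lemma u_not_MInf: "u z \<noteq> -\<infinity>"
  using u_proper unfolding eproper_on_def by auto

lemma \<rho>_not_MInf: "q \<in> P \<Longrightarrow> \<rho> q \<noteq> -\<infinity>"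
  using \<rho>_proper unfolding eproper_on_def by auto

lemma \<rho>_finite_somewhere:
  obtains q r where "q \<in> P" "\<rho> q = ereal r"
proof -
  obtain q where "q \<in> P" "\<rho> q \<noteq> \<infinity>" using \<rho>_proper unfolding eproper_on_def by auto
  with \<rho>_not_MInf[of q] show ?thesis by (cases "\<rho> q") (auto intro: that)
qed

lemma F_convex:
  assumes "q \<in> P"
  shows "convex_on UNIV (F q)"
proof (rule convex_onI)
  fix t :: real and a b :: "real^'n"
  assume t: "0 < t" "t < 1"
  have "F q ((1 - t) *\<^sub>R a + t *\<^sub>R b) \<le> (\<Sum>i\<in>UNIV. (1 - t) * (q $ i * f i a) + t * (q $ i * f i b))"
    unfolding F_def
  proof (rule sum_mono)
    fix i
    have "q $ i * f i ((1 - t) *\<^sub>R a + t *\<^sub>R b) \<le> q $ i * ((1 - t) * f i a + t * f i b)"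
      using convex_onD[OF f_convex, of t a b] t P_nonneg[OF assms] by (intro mult_left_mono) auto
    then show "q $ i * f i ((1 - t) *\<^sub>R a + t *\<^sub>R b) \<le> (1 - t) * (q $ i * f i a) + t * (q $ i * f i b)"
      by (simp add: algebra_simps)
  qed
  then show "F q ((1 - t) *\<^sub>R a + t *\<^sub>R b) \<le> (1 - t) * F q a + t * F q b"
    unfolding F_def by (simp add: sum.distrib sum_distrib_left)
qed simp

lemma F_has_derivative: "(F q has_derivative (\<lambda>h. gradF q z \<bullet> h)) (at z)"
proof -
  have "(F q has_derivative (\<lambda>h. \<Sum>i\<in>UNIV. q $ i * (fg i z \<bullet> h))) (at z)"
    unfolding F_def by (intro has_derivative_sum has_derivative_mult_right f_grad)
  then show ?thesis by (simp add: gradF_def inner_sum_left)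
qed

lemma F_gradient_inequality: "q \<in> P \<Longrightarrow> F q z + gradF q z \<bullet> (w - z) \<le> F q w"
  by (rule convex_gradient_inequality[OF F_convex F_has_derivative])

lemma gradF_lipschitz_sum:
  assumes "q \<in> P" "\<And>i. (Lc i)-lipschitz_on UNIV (fg i)"
  shows "(\<Sum>i\<in>UNIV. Lc i)-lipschitz_on UNIV (gradF q)"
proof (rule lipschitz_onI)
  show "0 \<le> (\<Sum>i\<in>UNIV. Lc i)"
    using lipschitz_on_nonneg[OF assms(2)] by (simp add: sum_nonneg)
  fix a b :: "real^'n"
  have "dist (gradF q a) (gradF q b) \<le> (\<Sum>i\<in>UNIV. norm (q $ i *\<^sub>R (fg i a - fg i b)))"
    unfolding gradF_def dist_norm
    by (simp add: sum_subtractf[symmetric] scaleR_diff_right norm_sum)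
  also have "\<dots> \<le> (\<Sum>i\<in>UNIV. Lc i * dist a b)"
  proof (rule sum_mono)
    fix i
    have "norm (q $ i *\<^sub>R (fg i a - fg i b)) \<le> 1 * dist (fg i a) (fg i b)"
      using P_nonneg[OF assms(1)] P_le_1[OF assms(1)] by (simp add: dist_norm mult_left_le_one_le)
    also have "\<dots> \<le> Lc i * dist a b" using lipschitz_onD[OF assms(2)] by simp
    finally show "norm (q $ i *\<^sub>R (fg i a - fg i b)) \<le> Lc i * dist a b" .
  qed
  finally show "dist (gradF q a) (gradF q b) \<le> (\<Sum>i\<in>UNIV. Lc i) * dist a b"
    by (simp add: sum_distrib_right)
qed

lemma gradF_lipschitz: "q \<in> P \<Longrightarrow> Lf-lipschitz_on UNIV (gradF q)"
  and Lf_nonneg: "0 \<le> Lf"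
proof -
  obtain Lc where Lc: "\<And>i. (Lc i)-lipschitz_on UNIV (fg i)"
    using f_lip by metis
  have lip: "(lip_const (gradF q))-lipschitz_on UNIV (gradF q)" if "q \<in> P" for q
    by (rule lip_const_lipschitz[OF gradF_lipschitz_sum[OF that Lc]])
  have "bdd_above ((\<lambda>q. lip_const (gradF q)) ` P)"
    by (rule bdd_aboveI2) (rule lip_const_le[OF gradF_lipschitz_sum[OF _ Lc]])
  then have le: "lip_const (gradF q) \<le> Lf" if "q \<in> P" for q
    unfolding Lf_def gradF_def[abs_def] using that by (intro cSup_upper) auto
  show "Lf-lipschitz_on UNIV (gradF q)" if "q \<in> P"
    using lipschitz_on_mono[OF lip[OF that] _ le[OF that]] by simp
  obtain q r where "q \<in> P" "\<rho> q = ereal r" by (rule \<rho>_finite_somewhere)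
  then show "0 \<le> Lf" using le lipschitz_on_nonneg[OF lip] by force
qed

definition fstar :: real where "fstar = real_of_ereal (fobj P f \<rho> u xstar)"

definition ustar :: real where "ustar = real_of_ereal (u xstar)"

lemma fobj_lower_bound:
  assumes "q \<in> P" "\<rho> q = ereal r" "u z = ereal uz"
  shows "ereal (F q z - r + uz) \<le> fobj P f \<rho> u z"
proof -
  have "ereal (F q z) - \<rho> q \<le> (SUP q\<in>P. ereal (\<Sum>i\<in>UNIV. q $ i * f i z) - \<rho> q)"
    unfolding F_def using assms(1) by (rule SUP_upper)
  then have "ereal (F q z - r) + ereal uz \<le> (SUP q\<in>P. ereal (\<Sum>i\<in>UNIV. q $ i * f i z) - \<rho> q) + ereal uz"
    using assms(2) by (intro add_right_mono) simp
  then show ?thesis unfolding fobj_def using assms(3) by simp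
qed

lemma fobj_xstar: "fobj P f \<rho> u xstar = ereal fstar" and u_xstar: "u xstar = ereal ustar"
proof -
  obtain q r where q: "q \<in> P" "\<rho> q = ereal r" by (rule \<rho>_finite_somewhere)
  have "u xstar \<noteq> \<infinity>"
    using fstar_fin fobj_lower_bound[OF q] u_not_MInf by (cases "u xstar") (auto simp: fobj_def)
  then show u: "u xstar = ereal ustar"
    unfolding ustar_def using u_not_MInf[of xstar] by (cases "u xstar") auto
  have "fobj P f \<rho> u xstar \<noteq> -\<infinity>" using fobj_lower_bound[OF q u] by auto
  then show "fobj P f \<rho> u xstar = ereal fstar"
    unfolding fstar_def using fstar_fin by (cases "fobj P f \<rho> u xstar") auto
qed

lemma fstar_le_fobj: "w \<in> X \<Longrightarrow> ereal fstar \<le> fobj P f \<rho> u w"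
  using xstar_opt fobj_xstar by metis

lemma fobj_upper_bound:
  assumes "u w = ereal uw" and "\<And>q r. q \<in> P \<Longrightarrow> \<rho> q = ereal r \<Longrightarrow> F q w - r \<le> K"
  shows "fobj P f \<rho> u w \<le> ereal (K + uw)"
proof -
  have "(SUP q\<in>P. ereal (\<Sum>i\<in>UNIV. q $ i * f i w) - \<rho> q) \<le> ereal K"
  proof (rule SUP_least)
    fix q assume q: "q \<in> P"
    then show "ereal (\<Sum>i\<in>UNIV. q $ i * f i w) - \<rho> q \<le> ereal K"
      using assms(2)[OF q] \<rho>_not_MInf[OF q] unfolding F_def by (cases "\<rho> q") auto
  qed
  then show ?thesis unfolding fobj_def assms(1) using add_right_mono[of _ "ereal K" "ereal uw"] by simp
qed

lemma suboptimality_bound_nonneg: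
  assumes "w \<in> X" "u w = ereal uw"
    and "\<And>q r. q \<in> P \<Longrightarrow> \<rho> q = ereal r \<Longrightarrow> F q w - r \<le> fstar - uw + c"
  shows "0 \<le> c"
proof -
  have "fobj P f \<rho> u w \<le> ereal (fstar - uw + c + uw)" by (rule fobj_upper_bound[OF assms(2,3)])
  with fstar_le_fobj[OF assms(1)] have "ereal fstar \<le> ereal (fstar - uw + c + uw)" by (rule order.trans)
  then show ?thesis by simp
qed

end

locale drao_s = smooth_minimax X P \<rho> u f fg Lf xstar
  for X :: "(real^'n::finite) set" and P :: "(real^'m::finite) set"
    and \<rho> u f fg Lf xstar +
  fixes NU :: "real^'m \<Rightarrow> real"
    and \<omega> :: "real^'m \<Rightarrow> real"
    and g\<omega> :: "real^'m \<Rightarrow> real^'m"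
    and pinit :: "real^'m"
    and R0 \<Delta> DP :: real
    and v :: "nat \<Rightarrow> 'm \<Rightarrow> real^'n"
    and c :: "nat \<Rightarrow> 'm \<Rightarrow> real"
    and M Mb \<beta> \<gamma> \<eta> \<theta> \<tau> :: "nat \<Rightarrow> real"
    and S :: "nat \<Rightarrow> nat"
    and \<delta> :: "nat \<Rightarrow> nat \<Rightarrow> real"
    and x xl xbar :: "nat \<Rightarrow> real^'n"
    and y :: "nat \<Rightarrow> nat \<Rightarrow> real^'n"
    and vt :: "nat \<Rightarrow> nat \<Rightarrow> real^'n"
    and p :: "nat \<Rightarrow> nat \<Rightarrow> real^'m"
    and pm1 :: "nat \<Rightarrow> real^'m"
  assumes NU_norm: "is_norm NU"
    and \<omega>_diff: "\<And>q. q \<in> P \<Longrightarrow> (\<omega> has_derivative (\<lambda>h. g\<omega> q \<bullet> h)) (at q within P)"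
    and \<omega>_strong: "\<And>q q'. q \<in> P \<Longrightarrow> q' \<in> P \<Longrightarrow>
                     \<omega> q \<ge> \<omega> q' + g\<omega> q' \<bullet> (q - q') + (NU (q - q'))\<^sup>2 / 2"
    and DP_bdd: "bdd_above {sqrt (2 * breg \<omega> g\<omega> q q') | q q'. q \<in> P \<and> q' \<in> P}"
    and DP_def: "DP = Sup {sqrt (2 * breg \<omega> g\<omega> q q') | q q'. q \<in> P \<and> q' \<in> P}"
    and DP_pos: "DP > 0"
    and x0_in: "x 0 \<in> X" and pinit_in: "pinit \<in> P"
    and R0_pos: "R0 > 0" and R0_ge: "R0 \<ge> norm (x 0 - xstar)"
    and \<Delta>_pos: "\<Delta> > 0"
    and \<theta>_def: "\<And>t. \<theta> t = (real t - 1) / real t"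
    and \<tau>_def: "\<And>t. \<tau> t = (real t - 1) / 2"
    and \<eta>_def: "\<And>t. \<eta> t = 2 * Lf / real t"
    and M_def: "\<And>t. M t = Mconst NU (v t)"
    and M_pos: "\<And>t. t \<ge> 1 \<Longrightarrow> M t > 0"
    and S_def: "\<And>t. S t = nat \<lceil>real t * \<Delta> * M t\<rceil>"
    and Mb_def: "\<And>t. Mb t = real (S t) / (real t * \<Delta>)"
    and \<beta>_def: "\<And>t. \<beta> t = DP * Mb t / R0"
    and \<gamma>_def: "\<And>t. \<gamma> t = R0 * Mb t / DP"
    and \<delta>_def: "\<And>t s. \<delta> t s = (if s = 1 then (if t = 1 then 1 else Mb t / Mb (t - 1)) else 1)"
    and xl0: "xl 0 = x 0"
    and xl_def: "\<And>t. t \<ge> 1 \<Longrightarrow>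
        xl t = (1 / (1 + \<tau> t)) *\<^sub>R ((x (t - 1) + \<theta> t *\<^sub>R (x (t - 1) - x (t - 2))) + \<tau> t *\<^sub>R xl (t - 1))"
    and v_def: "\<And>t i. v t i = fg i (xl (if t = 0 then 1 else t))"
    and c_def: "\<And>t i. c t i = xl t \<bullet> v t i - f i (xl t)"
    and y10: "y 1 0 = x 0" and p10: "p 1 0 = pinit" and pm11: "pm1 1 = pinit"
    and yt0: "\<And>t. t \<ge> 2 \<Longrightarrow> y t 0 = y (t - 1) (S (t - 1))"
    and pt0: "\<And>t. t \<ge> 2 \<Longrightarrow> p t 0 = p (t - 1) (S (t - 1))"
    and pm1t: "\<And>t. t \<ge> 2 \<Longrightarrow> pm1 t = p (t - 1) (S (t - 1) - 1)"
    and vt_def: "\<And>t s. t \<ge> 1 \<Longrightarrow> 1 \<le> s \<Longrightarrow> s \<le> S t \<Longrightarrow>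
        vt t s = (\<Sum>i\<in>UNIV. (p t (s - 1) $ i) *\<^sub>R v t i)
               + \<delta> t s *\<^sub>R (\<Sum>i\<in>UNIV. (p t (s - 1) $ i - (if s = 1 then pm1 t else p t (s - 2)) $ i)
                                         *\<^sub>R v (if s = 1 then t - 1 else t) i)"
    and y_step: "\<And>t s. t \<ge> 1 \<Longrightarrow> 1 \<le> s \<Longrightarrow> s \<le> S t \<Longrightarrow>
        y t s \<in> X \<and> (\<forall>z\<in>X.
          ereal (y t s \<bullet> vt t s) + u (y t s)
            + ereal (\<beta> t / 2 * (norm (y t s - y t (s - 1)))\<^sup>2 + \<eta> t / 2 * (norm (y t s - x (t - 1)))\<^sup>2)
          \<le> ereal (z \<bullet> vt t s) + u z
            + ereal (\<beta> t / 2 * (norm (z - y t (s - 1)))\<^sup>2 + \<eta> t / 2 * (norm (z - x (t - 1)))\<^sup>2))"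
    and p_step: "\<And>t s. t \<ge> 1 \<Longrightarrow> 1 \<le> s \<Longrightarrow> s \<le> S t \<Longrightarrow>
        p t s \<in> P \<and> (\<forall>q\<in>P.
          ereal (\<Sum>i\<in>UNIV. q $ i * (v t i \<bullet> y t s - c t i)) - \<rho> q
            - ereal (\<gamma> t * breg \<omega> g\<omega> q (p t (s - 1)))
          \<le> ereal (\<Sum>i\<in>UNIV. p t s $ i * (v t i \<bullet> y t s - c t i)) - \<rho> (p t s)
            - ereal (\<gamma> t * breg \<omega> g\<omega> (p t s) (p t (s - 1))))"
    and x_def: "\<And>t. t \<ge> 1 \<Longrightarrow> x t = (1 / real (S t)) *\<^sub>R (\<Sum>s=1..S t. y t s)"
    and xbar_def: "\<And>N. xbar N = (1 / (\<Sum>t=1..N. real t)) *\<^sub>R (\<Sum>t=1..N. real t *\<^sub>R x t)"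
begin

definition lam :: "nat \<Rightarrow> real" where
  "lam t = 1 / (\<Delta> * Mb t)"

lemma S_ge: "real t * \<Delta> * M t \<le> real (S t)"
  unfolding S_def by linarith

lemma S_pos:
  assumes "t \<ge> 1"
  shows "1 \<le> S t"
proof -
  have "0 < real t * \<Delta> * M t" using assms M_pos[OF assms] \<Delta>_pos by simp
  then have "0 < real (S t)" using S_ge[of t] by linarith
  then show ?thesis by simp
qed

lemma Mb_pos: "t \<ge> 1 \<Longrightarrow> 0 < Mb t"
  unfolding Mb_def using S_pos[of t] \<Delta>_pos by simp

lemma M_le_Mb: "t \<ge> 1 \<Longrightarrow> M t \<le> Mb t"
  unfolding Mb_def using S_ge[of t] \<Delta>_pos by (simp add: le_divide_eq mult.commute)

lemma \<beta>_pos: "t \<ge> 1 \<Longrightarrow> 0 < \<beta> t"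
  unfolding \<beta>_def using Mb_pos DP_pos R0_pos by simp

lemma \<gamma>_pos: "t \<ge> 1 \<Longrightarrow> 0 < \<gamma> t"
  unfolding \<gamma>_def using Mb_pos DP_pos R0_pos by simp

lemma \<eta>_nonneg: "0 \<le> \<eta> t"
  unfolding \<eta>_def using Lf_nonneg by simp

lemma \<beta>_mult_\<gamma>: "\<beta> t * \<gamma> t = (Mb t)\<^sup>2"
  unfolding \<beta>_def \<gamma>_def using DP_pos R0_pos by (simp add: power2_eq_square)

lemma lam_pos: "t \<ge> 1 \<Longrightarrow> 0 < lam t"
  unfolding lam_def using Mb_pos \<Delta>_pos by simp

lemma lam_\<beta>: "t \<ge> 1 \<Longrightarrow> lam t * \<beta> t = DP / (\<Delta> * R0)"
  unfolding lam_def \<beta>_def using Mb_pos[of t] by simp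

lemma lam_\<gamma>: "t \<ge> 1 \<Longrightarrow> lam t * \<gamma> t = R0 / (\<Delta> * DP)"
  unfolding lam_def \<gamma>_def using Mb_pos[of t] by simp

lemma lam_Mb: "t \<ge> 1 \<Longrightarrow> lam t * Mb t = 1 / \<Delta>"
  unfolding lam_def using Mb_pos[of t] by simp

lemma lam_S: "t \<ge> 1 \<Longrightarrow> lam t * real (S t) = real t"
  unfolding lam_def Mb_def using S_pos[of t] \<Delta>_pos by simp

lemma lam_\<delta>: "t \<ge> 2 \<Longrightarrow> lam t * \<delta> t 1 = lam (t - 1)"
  unfolding lam_def \<delta>_def using Mb_pos[of t] Mb_pos[of "t - 1"] by simp

lemma \<delta>_nonneg: "t \<ge> 1 \<Longrightarrow> 0 \<le> \<delta> t s"
  unfolding \<delta>_def using Mb_pos[of t] Mb_pos[of "t - 1"] by (auto intro: divide_nonneg_nonneg less_imp_le)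

lemma M_0: "M 0 = M 1"
proof -
  have "v 0 = v 1" by (rule ext) (simp add: v_def)
  then show ?thesis by (simp add: M_def)
qed

lemma \<delta>_M_le_Mb:
  assumes "t \<ge> 1"
  shows "\<delta> t s * M (if s = 1 then t - 1 else t) \<le> Mb t"
proof (cases "s = 1 \<and> t \<ge> 2")
  case True
  have "\<delta> t s * M (t - 1) = Mb t * (M (t - 1) / Mb (t - 1))" using True unfolding \<delta>_def by simp
  also have "\<dots> \<le> Mb t * 1"
    using M_le_Mb[of "t - 1"] Mb_pos[of "t - 1"] Mb_pos[OF assms] True by (intro mult_left_mono) auto
  finally show ?thesis using True by simp
next
  case False
  then show ?thesis using M_le_Mb[OF assms] M_0 assms unfolding \<delta>_def by auto
qed

lemma iterates_mem:
  assumes "t \<ge> 1" "s \<le> S t"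
  shows y_in_X: "y t s \<in> X" and p_in_P: "p t s \<in> P"
proof -
  have "y t s \<in> X \<and> p t s \<in> P"
  proof (cases "s = 0")
    case False
    then show ?thesis using y_step[of t s] p_step[of t s] assms by auto
  next
    case True
    show ?thesis
    proof (cases "t = 1")
      case True
      then show ?thesis using \<open>s = 0\<close> y10 p10 x0_in pinit_in by simp
    next
      case False
      then have "t \<ge> 2" "t - 1 \<ge> 1" using assms by auto
      then show ?thesis
        using \<open>s = 0\<close> yt0 pt0 y_step[of "t - 1" "S (t - 1)"] p_step[of "t - 1" "S (t - 1)"] S_pos
        by simp
    qed
  qed
  then show "y t s \<in> X" "p t s \<in> P" by auto
qed

lemma pm1_in_P: "t \<ge> 1 \<Longrightarrow> pm1 t \<in> P"
  using pm11 pinit_in pm1t p_in_P[of "t - 1" "S (t - 1) - 1"] by (cases "t = 1") auto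

definition prevp :: "nat \<Rightarrow> nat \<Rightarrow> real^'m" where
  "prevp t s = (if s = 0 then pm1 t else p t (s - 1))"

lemma prevp_in_P: "t \<ge> 1 \<Longrightarrow> s \<le> S t \<Longrightarrow> prevp t s \<in> P"
  unfolding prevp_def using pm1_in_P p_in_P[of t "s - 1"] by auto

lemma NU_le_breg: "q \<in> P \<Longrightarrow> q' \<in> P \<Longrightarrow> (NU (q - q'))\<^sup>2 \<le> 2 * breg \<omega> g\<omega> q q'"
  using \<omega>_strong[of q q'] unfolding breg_def by simp

lemma breg_nonneg: "q \<in> P \<Longrightarrow> q' \<in> P \<Longrightarrow> 0 \<le> breg \<omega> g\<omega> q q'"
  using NU_le_breg[of q q'] zero_le_power2[of "NU (q - q')"] by linarith

lemma breg_le_DP: "q \<in> P \<Longrightarrow> q' \<in> P \<Longrightarrow> 2 * breg \<omega> g\<omega> q q' \<le> DP\<^sup>2"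
proof -
  assume q: "q \<in> P" "q' \<in> P"
  have "sqrt (2 * breg \<omega> g\<omega> q q') \<le> DP"
    unfolding DP_def by (rule cSup_upper[OF _ DP_bdd]) (use q in blast)
  then show ?thesis using breg_nonneg[OF q] DP_pos by (simp add: real_sqrt_le_iff sqrt_le_D)
qed

lemma NU_le_DP: "q \<in> P \<Longrightarrow> q' \<in> P \<Longrightarrow> NU (q - q') \<le> DP"
  using NU_le_breg breg_le_DP DP_pos by (smt (verit) power2_le_imp_le)

definition uy :: "nat \<Rightarrow> nat \<Rightarrow> real" where
  "uy t s = real_of_ereal (u (y t s))"

definition \<rho>p :: "nat \<Rightarrow> nat \<Rightarrow> real" where
  "\<rho>p t s = real_of_ereal (\<rho> (p t s))"

definition lin :: "real^'m \<Rightarrow> nat \<Rightarrow> real^'n \<Rightarrow> real" where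
  "lin q t w = (\<Sum>i\<in>UNIV. q $ i * (v t i \<bullet> w - c t i))"

lemma lin_eq_linearization:
  assumes "t \<ge> 1"
  shows "lin q t w = F q (xl t) + gradF q (xl t) \<bullet> (w - xl t)"
proof -
  have "lin q t w = (\<Sum>i\<in>UNIV. q $ i * f i (xl t) + q $ i * (fg i (xl t) \<bullet> (w - xl t)))"
    unfolding lin_def c_def v_def using assms
    by (intro sum.cong) (auto simp: inner_diff_right inner_commute algebra_simps)
  then show ?thesis unfolding F_def gradF_def by (simp add: sum.distrib inner_sum_left)
qed

lemma lin_xstar_le: "t \<ge> 1 \<Longrightarrow> q \<in> P \<Longrightarrow> lin q t xstar \<le> F q xstar"
  using F_gradient_inequality lin_eq_linearization by simp

lemma primal_step:
  assumes "t \<ge> 1" "1 \<le> s" "s \<le> S t"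
  shows u_y: "u (y t s) = ereal (uy t s)"
    and "(y t s - xstar) \<bullet> vt t s + uy t s - ustar + \<beta> t / 2 * (norm (y t s - y t (s - 1)))\<^sup>2
       + \<eta> t / 2 * (norm (y t s - x (t - 1)))\<^sup>2 + (\<beta> t + \<eta> t) / 2 * (norm (xstar - y t s))\<^sup>2
     \<le> \<beta> t / 2 * (norm (xstar - y t (s - 1)))\<^sup>2 + \<eta> t / 2 * (norm (xstar - x (t - 1)))\<^sup>2"
proof -
  obtain r where "u (y t s) = ereal r"
    "(y t s - xstar) \<bullet> vt t s + r - ustar + \<beta> t / 2 * (norm (y t s - y t (s - 1)))\<^sup>2
       + \<eta> t / 2 * (norm (y t s - x (t - 1)))\<^sup>2 + (\<beta> t + \<eta> t) / 2 * (norm (xstar - y t s))\<^sup>2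
     \<le> \<beta> t / 2 * (norm (xstar - y t (s - 1)))\<^sup>2 + \<eta> t / 2 * (norm (xstar - x (t - 1)))\<^sup>2"
    using y_step[OF assms] by (elim conjE prox_three_point[OF X_convex u_convex u_not_MInf _ xstar_in u_xstar])
  moreover from this(1) have "uy t s = r" by (simp add: uy_def)
  ultimately show "u (y t s) = ereal (uy t s)"
    "(y t s - xstar) \<bullet> vt t s + uy t s - ustar + \<beta> t / 2 * (norm (y t s - y t (s - 1)))\<^sup>2
       + \<eta> t / 2 * (norm (y t s - x (t - 1)))\<^sup>2 + (\<beta> t + \<eta> t) / 2 * (norm (xstar - y t s))\<^sup>2
     \<le> \<beta> t / 2 * (norm (xstar - y t (s - 1)))\<^sup>2 + \<eta> t / 2 * (norm (xstar - x (t - 1)))\<^sup>2"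
    by simp_all
qed

lemma dual_step:
  assumes "t \<ge> 1" "1 \<le> s" "s \<le> S t" "q \<in> P" "\<rho> q = ereal r"
  shows "\<rho> (p t s) = ereal (\<rho>p t s)"
    and "lin q t (y t s) - r - (lin (p t s) t (y t s) - \<rho>p t s)
       \<le> \<gamma> t * (breg \<omega> g\<omega> q (p t (s - 1)) - breg \<omega> g\<omega> q (p t s) - breg \<omega> g\<omega> (p t s) (p t (s - 1)))"
proof -
  note step = p_step[OF assms(1-3)]
  have "\<forall>q\<in>P. \<rho> q \<noteq> -\<infinity>" using \<rho>_not_MInf by blast
  then obtain r' where "\<rho> (p t s) = ereal r'"
    "lin q t (y t s) - r - (lin (p t s) t (y t s) - r')
       \<le> \<gamma> t * (breg \<omega> g\<omega> q (p t (s - 1)) - breg \<omega> g\<omega> q (p t s) - breg \<omega> g\<omega> (p t s) (p t (s - 1)))"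
    unfolding lin_def
    by (rule bregman_prox_three_point[OF P_convex \<rho>_convex _ \<omega>_diff[OF conjunct1[OF step]]
          conjunct1[OF step] assms(4,5) conjunct2[OF step]])
  moreover from this(1) have "\<rho>p t s = r'" by (simp add: \<rho>p_def)
  ultimately show "\<rho> (p t s) = ereal (\<rho>p t s)"
    "lin q t (y t s) - r - (lin (p t s) t (y t s) - \<rho>p t s)
       \<le> \<gamma> t * (breg \<omega> g\<omega> q (p t (s - 1)) - breg \<omega> g\<omega> q (p t s) - breg \<omega> g\<omega> (p t s) (p t (s - 1)))"
    by simp_all
qed

lemma \<rho>_p_finite: "t \<ge> 1 \<Longrightarrow> 1 \<le> s \<Longrightarrow> s \<le> S t \<Longrightarrow> \<rho> (p t s) = ereal (\<rho>p t s)"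
  using dual_step(1) \<rho>_finite_somewhere by metis

(* The extrapolation term of the dual step after (t, s), tested against y t s - xstar; for s = 0
   it involves the last two dual iterates of phase t - 1 and the multipliers v (t - 1). *)
definition coupling :: "nat \<Rightarrow> nat \<Rightarrow> real" where
  "coupling t s = \<delta> t (Suc s) *
     (\<Sum>i\<in>UNIV. (p t s - prevp t s) $ i * (v (if s = 0 then t - 1 else t) i \<bullet> (y t s - xstar)))"

(* \<kappa>y = lam t * \<beta> t and \<kappa>p = lam t * \<gamma> t for every t, which is what lets the potential
   telescope. *)
definition \<kappa>y :: real where "\<kappa>y = DP / (\<Delta> * R0)"

definition \<kappa>p :: real where "\<kappa>p = R0 / (\<Delta> * DP)"

definition potential :: "real^'m \<Rightarrow> nat \<Rightarrow> nat \<Rightarrow> real" where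
  "potential q t s = \<kappa>y / 2 * (norm (xstar - y t s))\<^sup>2
     + \<kappa>p * (breg \<omega> g\<omega> q (p t s) + breg \<omega> g\<omega> (p t s) (prevp t s)) - lam t * coupling t s"

definition gap :: "real^'m \<Rightarrow> real \<Rightarrow> nat \<Rightarrow> nat \<Rightarrow> real" where
  "gap q r t s = lin q t (y t s) - r + uy t s - (lin (p t s) t xstar - \<rho>p t s + ustar)
     + \<eta> t / 2 * ((norm (xstar - y t s))\<^sup>2 + (norm (y t s - x (t - 1)))\<^sup>2 - (norm (xstar - x (t - 1)))\<^sup>2)"

lemma vt_inner:
  assumes "t \<ge> 1" "1 \<le> s" "s \<le> S t"
  shows "vt t s \<bullet> w = (\<Sum>i\<in>UNIV. p t (s - 1) $ i * (v t i \<bullet> w))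
     + \<delta> t s * (\<Sum>i\<in>UNIV. (p t (s - 1) - prevp t (s - 1)) $ i * (v (if s = 1 then t - 1 else t) i \<bullet> w))"
proof -
  have "prevp t (s - 1) = (if s = 1 then pm1 t else p t (s - 2))"
    unfolding prevp_def using assms by (auto simp: numeral_2_eq_2)
  then show ?thesis unfolding vt_def[OF assms] by (simp add: inner_add_left inner_sum_left)
qed

lemma coupling_identity:
  assumes "t \<ge> 1" "1 \<le> s" "s \<le> S t"
  defines "V' \<equiv> v (if s = 1 then t - 1 else t)"
  shows "lin (p t s) t (y t s) - lin (p t s) t xstar
    = (y t s - xstar) \<bullet> vt t s + coupling t s - coupling t (s - 1)
      - \<delta> t s * (\<Sum>i\<in>UNIV. (p t (s - 1) - prevp t (s - 1)) $ i * (V' i \<bullet> (y t s - y t (s - 1))))"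
proof -
  define d where "d = p t (s - 1) - prevp t (s - 1)"
  let ?pair = "\<lambda>q V w. (\<Sum>i\<in>UNIV. q $ i * (V i \<bullet> w))"
  have split_p: "?pair (p t s) (v t) w = ?pair (p t (s - 1)) (v t) w + ?pair (p t s - p t (s - 1)) (v t) w" for w
    by (simp add: sum.distrib[symmetric] algebra_simps)
  have split_w: "?pair d V' (y t s - xstar) = ?pair d V' (y t (s - 1) - xstar) + ?pair d V' (y t s - y t (s - 1))"
    by (simp add: sum.distrib[symmetric] algebra_simps inner_diff_right)
  have "lin (p t s) t (y t s) - lin (p t s) t xstar = ?pair (p t s) (v t) (y t s - xstar)"
    unfolding lin_def by (simp add: sum_subtractf[symmetric] inner_diff_right algebra_simps)
  moreover have "vt t s \<bullet> (y t s - xstar) = ?pair (p t (s - 1)) (v t) (y t s - xstar) + \<delta> t s * ?pair d V' (y t s - xstar)"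
    unfolding d_def V'_def by (rule vt_inner[OF assms(1-3)])
  moreover have "coupling t s = ?pair (p t s - p t (s - 1)) (v t) (y t s - xstar)"
    using assms(2) unfolding coupling_def prevp_def \<delta>_def by simp
  moreover have "coupling t (s - 1) = \<delta> t s * ?pair d V' (y t (s - 1) - xstar)"
    using assms(2) unfolding coupling_def d_def V'_def by (simp add: Suc_diff_1[of s])
  ultimately show ?thesis
    using split_p[of "y t s - xstar"] split_w unfolding d_def by (simp add: inner_commute algebra_simps)
qed

lemma extrapolation_error_bound:
  assumes "t \<ge> 1" "1 \<le> s" "s \<le> S t"
  defines "V' \<equiv> v (if s = 1 then t - 1 else t)"
  shows "- (\<delta> t s * (\<Sum>i\<in>UNIV. (p t (s - 1) - prevp t (s - 1)) $ i * (V' i \<bullet> (y t s - y t (s - 1)))))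
    \<le> \<beta> t / 2 * (norm (y t s - y t (s - 1)))\<^sup>2 + \<gamma> t * breg \<omega> g\<omega> (p t (s - 1)) (prevp t (s - 1))"
proof -
  define d where "d = p t (s - 1) - prevp t (s - 1)"
  define e where "e = y t s - y t (s - 1)"
  have "- (\<delta> t s * (\<Sum>i\<in>UNIV. d $ i * (V' i \<bullet> e))) = \<delta> t s * (\<Sum>i\<in>UNIV. (- d) $ i * (V' i \<bullet> e))"
    by (simp add: sum_negf)
  also have "\<dots> \<le> \<delta> t s * (M (if s = 1 then t - 1 else t) * NU (- d) * norm e)"
    unfolding V'_def M_def by (rule mult_left_mono[OF Mconst_bilinear[OF NU_norm] \<delta>_nonneg[OF assms(1)]])
  also have "\<dots> = (\<delta> t s * M (if s = 1 then t - 1 else t)) * NU d * norm e"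
    using is_norm_minus_commute[OF NU_norm, of 0 d] by simp
  also have "\<dots> \<le> Mb t * NU d * norm e"
    using \<delta>_M_le_Mb[OF assms(1)] is_norm_nonneg[OF NU_norm] by (intro mult_right_mono) auto
  also have "\<dots> \<le> \<beta> t / 2 * (norm e)\<^sup>2 + \<gamma> t / 2 * (NU d)\<^sup>2"
    using \<beta>_pos[OF assms(1)] \<beta>_mult_\<gamma> by (intro product_le_sum_squares) auto
  also have "\<dots> \<le> \<beta> t / 2 * (norm e)\<^sup>2 + \<gamma> t * breg \<omega> g\<omega> (p t (s - 1)) (prevp t (s - 1))"
  proof -
    have "(NU d)\<^sup>2 \<le> 2 * breg \<omega> g\<omega> (p t (s - 1)) (prevp t (s - 1))"
      using NU_le_breg[OF p_in_P prevp_in_P, of t "s - 1" t "s - 1"] assms unfolding d_def by simp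
    then have "\<gamma> t * (NU d)\<^sup>2 \<le> \<gamma> t * (2 * breg \<omega> g\<omega> (p t (s - 1)) (prevp t (s - 1)))"
      using \<gamma>_pos[OF assms(1)] by (intro mult_left_mono) auto
    then show ?thesis by simp
  qed
  finally show ?thesis unfolding d_def e_def .
qed

lemma step_descent:
  assumes t: "t \<ge> 1" "1 \<le> s" "s \<le> S t" and q: "q \<in> P" "\<rho> q = ereal r"
  shows "lam t * gap q r t s \<le> potential q t (s - 1) - potential q t s"
proof -
  define ys a b where "ys = y t s" and "a = y t (s - 1)" and "b = x (t - 1)"
  define ps p0 pp where "ps = p t s" and "p0 = p t (s - 1)" and "pp = prevp t (s - 1)"
  define B where "B q q' = breg \<omega> g\<omega> q q'" for q q'
  note primal = primal_step(2)[OF t, folded ys_def a_def b_def]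
  note dual = dual_step(2)[OF t q, folded ys_def ps_def p0_def B_def]
  note coupling = coupling_identity[OF t, folded ys_def a_def ps_def p0_def pp_def]
  note extrapolation = extrapolation_error_bound[OF t, folded ys_def a_def p0_def pp_def B_def]
  have "gap q r t s \<le> \<gamma> t * (B q p0 + B p0 pp) - \<gamma> t * (B q ps + B ps p0)
      + \<beta> t / 2 * (norm (xstar - a))\<^sup>2 - \<beta> t / 2 * (norm (xstar - ys))\<^sup>2 + coupling t s - coupling t (s - 1)"
    using primal dual coupling extrapolation unfolding gap_def ys_def[symmetric] ps_def[symmetric] b_def[symmetric]
    by (simp add: algebra_simps add_divide_distrib)
  then have "lam t * gap q r t s \<le> lam t * (\<gamma> t * (B q p0 + B p0 pp) - \<gamma> t * (B q ps + B ps p0)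
      + \<beta> t / 2 * (norm (xstar - a))\<^sup>2 - \<beta> t / 2 * (norm (xstar - ys))\<^sup>2 + coupling t s - coupling t (s - 1))"
    using lam_pos[OF t(1)] by (intro mult_left_mono) auto
  also have "\<dots> = (lam t * \<gamma> t) * (B q p0 + B p0 pp) - (lam t * \<gamma> t) * (B q ps + B ps p0)
      + (lam t * \<beta> t) / 2 * (norm (xstar - a))\<^sup>2 - (lam t * \<beta> t) / 2 * (norm (xstar - ys))\<^sup>2
      + lam t * coupling t s - lam t * coupling t (s - 1)"
    by (simp add: algebra_simps)
  also have "\<dots> = potential q t (s - 1) - potential q t s"
  proof -
    have "prevp t s = p0" unfolding prevp_def p0_def using t by simp
    then show ?thesis
      unfolding lam_\<beta>[OF t(1)] lam_\<gamma>[OF t(1)] \<kappa>y_def[symmetric] \<kappa>p_def[symmetric] potential_def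
      unfolding ys_def a_def ps_def p0_def pp_def B_def by (simp add: algebra_simps)
  qed
  finally show ?thesis .
qed

section \<open>Telescoping over all inner steps\<close>

definition steps_upto :: "nat \<Rightarrow> nat \<Rightarrow> (nat \<times> nat) set" where
  "steps_upto t s = (SIGMA t':{1..<t}. {1..S t'}) \<union> ({t} \<times> {1..s})"

definition gap_sum :: "real^'m \<Rightarrow> real \<Rightarrow> nat \<Rightarrow> nat \<Rightarrow> real" where
  "gap_sum q r t s = (\<Sum>(t', s')\<in>steps_upto t s. lam t' * gap q r t' s')"

lemma finite_steps_upto: "finite (steps_upto t s)"
  unfolding steps_upto_def by auto

lemma steps_upto_Suc: "steps_upto t (Suc s) = insert (t, Suc s) (steps_upto t s)" "(t, Suc s) \<notin> steps_upto t s"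
  unfolding steps_upto_def by auto

lemma steps_upto_first: "steps_upto 1 0 = {}"
  unfolding steps_upto_def by auto

lemma steps_upto_next_phase: "t \<ge> 1 \<Longrightarrow> steps_upto (Suc t) 0 = steps_upto t (S t)"
  unfolding steps_upto_def by (auto simp: less_Suc_eq)

lemma steps_upto_all: "N \<ge> 1 \<Longrightarrow> steps_upto N (S N) = (SIGMA t:{1..N}. {1..S t})"
  unfolding steps_upto_def by (auto simp: less_le)

lemma steps_upto_mem:
  "(t', s') \<in> steps_upto t s \<Longrightarrow> t \<ge> 1 \<Longrightarrow> s \<le> S t \<Longrightarrow> 1 \<le> t' \<and> 1 \<le> s' \<and> s' \<le> S t'"
  unfolding steps_upto_def by auto

lemma potential_next_phase:
  assumes "t \<ge> 1"
  shows "potential q (Suc t) 0 = potential q t (S t)"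
proof -
  have S: "S t \<ge> 1" by (rule S_pos[OF assms])
  have "prevp (Suc t) 0 = prevp t (S t)" unfolding prevp_def using pm1t[of "Suc t"] assms S by simp
  moreover have "lam (Suc t) * coupling (Suc t) 0 = lam t * coupling t (S t)"
  proof -
    have "\<delta> t (Suc (S t)) = 1" using S unfolding \<delta>_def by simp
    then show ?thesis
      using lam_\<delta>[of "Suc t"] assms S yt0[of "Suc t"] pt0[of "Suc t"] \<open>prevp (Suc t) 0 = prevp t (S t)\<close>
      unfolding coupling_def by (simp add: mult.assoc[symmetric])
  qed
  ultimately show ?thesis
    unfolding potential_def using yt0[of "Suc t"] pt0[of "Suc t"] assms by simp
qed

lemma gap_sum_le_potential:
  assumes q: "q \<in> P" "\<rho> q = ereal r" and t: "t \<ge> 1" "s \<le> S t"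
  shows "gap_sum q r t s \<le> potential q 1 0 - potential q t s"
  using t
proof (induction t arbitrary: s rule: nat_induct_at_least)
  case base
  then show ?case
  proof (induction s)
    case 0
    then show ?case unfolding gap_sum_def steps_upto_first by simp
  next
    case (Suc s)
    have "gap_sum q r 1 (Suc s) = lam 1 * gap q r 1 (Suc s) + gap_sum q r 1 s"
      unfolding gap_sum_def steps_upto_Suc(1) using steps_upto_Suc(2) finite_steps_upto by simp
    also have "\<dots> \<le> (potential q 1 s - potential q 1 (Suc s)) + (potential q 1 0 - potential q 1 s)"
      using step_descent[OF _ _ Suc.prems q] Suc.IH Suc.prems by (intro add_mono) auto
    finally show ?case by simp
  qed
next
  case (Suc t)
  show ?case using Suc.prems
  proof (induction s)
    case 0
    have "gap_sum q r (Suc t) 0 = gap_sum q r t (S t)"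
      unfolding gap_sum_def using steps_upto_next_phase[OF Suc.hyps] by simp
    also have "\<dots> \<le> potential q 1 0 - potential q (Suc t) 0"
      using Suc.IH[of "S t"] potential_next_phase[OF Suc.hyps] by simp
    finally show ?case .
  next
    case (Suc s)
    have "gap_sum q r (Suc t) (Suc s) = lam (Suc t) * gap q r (Suc t) (Suc s) + gap_sum q r (Suc t) s"
      unfolding gap_sum_def steps_upto_Suc(1) using steps_upto_Suc(2) finite_steps_upto by simp
    also have "\<dots> \<le> (potential q (Suc t) s - potential q (Suc t) (Suc s)) + (potential q 1 0 - potential q (Suc t) s)"
      using step_descent[OF _ _ Suc.prems q] Suc.IH Suc.prems by (intro add_mono) auto
    finally show ?case by simp
  qed
qed

lemma potential_init_le:
  assumes "q \<in> P"
  shows "potential q 1 0 \<le> DP * R0 / \<Delta>"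
proof -
  have "potential q 1 0 = \<kappa>y / 2 * (norm (x 0 - xstar))\<^sup>2 + \<kappa>p * breg \<omega> g\<omega> q pinit"
    unfolding potential_def coupling_def prevp_def using y10 p10 pm11
    by (simp add: norm_minus_commute breg_def)
  also have "\<dots> \<le> \<kappa>y / 2 * R0\<^sup>2 + \<kappa>p * (DP\<^sup>2 / 2)"
    using R0_ge breg_le_DP[OF assms pinit_in] DP_pos R0_pos \<Delta>_pos unfolding \<kappa>y_def \<kappa>p_def
    by (intro add_mono mult_left_mono power_mono) auto
  also have "\<dots> = DP * R0 / \<Delta>"
    unfolding \<kappa>y_def \<kappa>p_def using DP_pos R0_pos by (simp add: power2_eq_square field_simps)
  finally show ?thesis .
qed

lemma coupling_bound:
  assumes "t \<ge> 1" "1 \<le> s" "s \<le> S t"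
  shows "lam t * coupling t s \<le> NU (p t s - p t (s - 1)) * norm (y t s - xstar) / \<Delta>"
proof -
  have "coupling t s \<le> M t * NU (p t s - p t (s - 1)) * norm (y t s - xstar)"
    using assms(2) Mconst_bilinear[OF NU_norm, of "p t s - p t (s - 1)" "v t" "y t s - xstar"]
    unfolding coupling_def prevp_def \<delta>_def M_def by simp
  also have "\<dots> \<le> Mb t * NU (p t s - p t (s - 1)) * norm (y t s - xstar)"
    using M_le_Mb[OF assms(1)] is_norm_nonneg[OF NU_norm] by (intro mult_right_mono) auto
  finally have "lam t * coupling t s \<le> (lam t * Mb t) * NU (p t s - p t (s - 1)) * norm (y t s - xstar)"
    using lam_pos[OF assms(1)] by (simp add: mult.assoc mult_left_mono)
  then show ?thesis using lam_Mb[OF assms(1)] by simp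
qed

lemma potential_eq:
  assumes "1 \<le> s"
  shows "potential q t s = \<kappa>y / 2 * (norm (y t s - xstar))\<^sup>2 + \<kappa>p * breg \<omega> g\<omega> q (p t s)
    + \<kappa>p * breg \<omega> g\<omega> (p t s) (p t (s - 1)) - lam t * coupling t s"
  unfolding potential_def prevp_def using assms by (simp add: norm_minus_commute distrib_left)

lemma \<kappa>_pos: "0 < \<kappa>y" "0 < \<kappa>p"
  unfolding \<kappa>y_def \<kappa>p_def using DP_pos R0_pos \<Delta>_pos by simp_all

lemma potential_nonneg:
  assumes "q \<in> P" "t \<ge> 1" "1 \<le> s" "s \<le> S t"
  shows "0 \<le> potential q t s"
proof -
  define d e where "d = NU (p t s - p t (s - 1))" and "e = norm (y t s - xstar)"
  have pin: "p t s \<in> P" "p t (s - 1) \<in> P" using p_in_P assms(2,4) by auto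
  have "d * e / \<Delta> = (1 / \<Delta>) * d * e" by simp
  also have "\<dots> \<le> \<kappa>y / 2 * e\<^sup>2 + \<kappa>p / 2 * d\<^sup>2"
    using \<kappa>_pos unfolding \<kappa>y_def \<kappa>p_def using DP_pos R0_pos \<Delta>_pos
    by (intro product_le_sum_squares) (simp_all add: power2_eq_square)
  also have "\<kappa>p / 2 * d\<^sup>2 \<le> \<kappa>p * breg \<omega> g\<omega> (p t s) (p t (s - 1))"
    using NU_le_breg[OF pin] \<kappa>_pos unfolding d_def by simp
  finally show ?thesis
    using coupling_bound[OF assms(2-4)] breg_nonneg[OF assms(1) pin(1)] \<kappa>_pos potential_eq[OF assms(3), of q t]
    unfolding d_def e_def by (smt (verit) mult_nonneg_nonneg)
qed

lemma potential_lower_bound: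
  assumes "q \<in> P" "t \<ge> 1" "1 \<le> s" "s \<le> S t"
  shows "\<kappa>y / 2 * (norm (y t s - xstar))\<^sup>2 - DP / \<Delta> * norm (y t s - xstar) \<le> potential q t s"
proof -
  have pin: "p t s \<in> P" "p t (s - 1) \<in> P" using p_in_P assms(2,4) by auto
  have "NU (p t s - p t (s - 1)) * norm (y t s - xstar) / \<Delta> \<le> DP / \<Delta> * norm (y t s - xstar)"
    using NU_le_DP[OF pin] \<Delta>_pos by (simp add: divide_right_mono mult_right_mono)
  moreover have "0 \<le> \<kappa>p * breg \<omega> g\<omega> q (p t s)" "0 \<le> \<kappa>p * breg \<omega> g\<omega> (p t s) (p t (s - 1))"
    using breg_nonneg[OF assms(1) pin(1)] breg_nonneg[OF pin] \<kappa>_pos by simp_all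
  ultimately show ?thesis
    using coupling_bound[OF assms(2-4)] potential_eq[OF assms(3), of q t] by linarith
qed

lemma x_eq_average: "t \<ge> 1 \<Longrightarrow> x t = (\<Sum>s=1..S t. (1 / real (S t)) *\<^sub>R y t s)"
  using x_def by (simp add: scaleR_sum_right)

lemma average_weights: "t \<ge> 1 \<Longrightarrow> (\<Sum>s=1..S t. 1 / real (S t)) = 1"
  using S_pos[of t] by simp

lemma x_in_convex:
  assumes "convex C" "t \<ge> 1" "\<And>s. 1 \<le> s \<Longrightarrow> s \<le> S t \<Longrightarrow> y t s \<in> C"
  shows "x t \<in> C"
  unfolding x_eq_average[OF assms(2)]
  by (rule convex_sum[OF _ assms(1) average_weights[OF assms(2)]]) (use assms(3) in auto)

lemma x_in_X: "x t \<in> X"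
  using x0_in x_in_convex[OF X_convex _ y_in_X] by (cases "t = 0") auto

lemma sum_weights_pos: "N \<ge> 1 \<Longrightarrow> 0 < (\<Sum>t=1..N. real t)"
  by (rule sum_pos2[of _ N]) auto

lemma xbar_eq_average: "xbar N = (\<Sum>t=1..N. (real t / (\<Sum>t=1..N. real t)) *\<^sub>R x t)"
  unfolding xbar_def by (simp add: scaleR_sum_right)

lemma xbar_weights: "N \<ge> 1 \<Longrightarrow> (\<Sum>t=1..N. real t / (\<Sum>t=1..N. real t)) = 1"
  using sum_weights_pos[of N] by (simp add: sum_divide_distrib[symmetric])

lemma xbar_in_X: "N \<ge> 1 \<Longrightarrow> xbar N \<in> X"
  unfolding xbar_eq_average using sum_weights_pos[of N]
  by (intro convex_sum[OF _ X_convex xbar_weights]) (auto intro: x_in_X)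

definition ux :: "nat \<Rightarrow> real" where
  "ux t = real_of_ereal (u (x t))"

lemma u_x:
  assumes "t \<ge> 1"
  shows "u (x t) = ereal (ux t)" and "real (S t) * ux t \<le> (\<Sum>s=1..S t. uy t s)"
proof -
  obtain r where r: "u (x t) = ereal r" "r \<le> (\<Sum>s=1..S t. 1 / real (S t) * uy t s)"
    unfolding x_eq_average[OF assms]
    by (rule econvex_jensen[OF u_convex u_not_MInf _ _ _ average_weights[OF assms]])
      (use S_pos[OF assms] u_y[OF assms] in auto)
  then show "u (x t) = ereal (ux t)" by (simp add: ux_def)
  show "real (S t) * ux t \<le> (\<Sum>s=1..S t. uy t s)"
    using r S_pos[OF assms] by (simp add: ux_def sum_divide_distrib[symmetric] field_simps)
qed

lemma sq_dist_x_le: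
  assumes "t \<ge> 1"
  shows "real (S t) * (norm (x t - w))\<^sup>2 \<le> (\<Sum>s=1..S t. (norm (y t s - w))\<^sup>2)"
proof -
  have "(norm (x t - w))\<^sup>2 \<le> (\<Sum>s=1..S t. 1 / real (S t) * (norm (y t s - w))\<^sup>2)"
    unfolding x_eq_average[OF assms]
    by (rule convex_on_sum[OF _ _ convex_on_dist_power2 average_weights[OF assms]]) (use S_pos[OF assms] in auto)
  then show ?thesis using S_pos[OF assms] by (simp add: sum_divide_distrib[symmetric] field_simps)
qed

lemma xl_rec:
  assumes "t \<ge> 1"
  shows "(1 + \<tau> t) *\<^sub>R xl t = (x (t - 1) + \<theta> t *\<^sub>R (x (t - 1) - x (t - 2))) + \<tau> t *\<^sub>R xl (t - 1)"
proof -
  have "1 \<le> real t" using assms by simp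
  then have "0 \<le> \<tau> t" unfolding \<tau>_def by simp
  then have "1 + \<tau> t > 0" by linarith
  then show ?thesis unfolding xl_def[OF assms] by simp
qed

lemma agd_cross_bound:
  assumes "q \<in> P"
  shows "real n * (d \<bullet> (gradF q a - gradF q b))
    \<le> Lf * (norm d)\<^sup>2 + real n * (real n + 1) / 2 * breg (F q) (gradF q) b a"
proof -
  have "0 \<le> breg (F q) (gradF q) b a"
    using F_gradient_inequality[OF assms, of a b] by (simp add: breg_def)
  then have "(real n)\<^sup>2 / 2 * breg (F q) (gradF q) b a \<le> real n * (real n + 1) / 2 * breg (F q) (gradF q) b a"
    by (intro mult_right_mono) (auto simp: power2_eq_square field_simps)
  with lipschitz_gradient_cross_bound[OF F_convex[OF assms] F_has_derivative gradF_lipschitz[OF assms]]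
  show ?thesis by (smt (verit) of_nat_0_le_iff)
qed

lemma agd_step_identity:
  fixes q :: "real^'m" and a :: "real^'n" and n :: nat
  defines "D t \<equiv> breg (F q) (gradF q) (xl t) a" and "dx t \<equiv> x t - x (t - 1)"
  shows "real (Suc n) * (F q a + gradF q a \<bullet> (x (Suc n) - a) - lin q (Suc n) (x (Suc n)))
    = real n * (real n + 1) / 2 * D n - real (Suc n) * (real (Suc n) + 1) / 2 * D (Suc n)
      - real n * (real n + 1) / 2 * breg (F q) (gradF q) (xl n) (xl (Suc n))
      + real (Suc n) * (dx (Suc n) \<bullet> (gradF q a - gradF q (xl (Suc n))))
      - real n * (dx n \<bullet> (gradF q a - gradF q (xl n)))
      - real n * (dx n \<bullet> (gradF q (xl n) - gradF q (xl (Suc n))))"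
proof -
  define ga g g' where "ga = gradF q a" and "g = gradF q (xl n)" and "g' = gradF q (xl (Suc n))"
  have \<tau>\<theta>: "\<tau> (Suc n) = real n / 2" "(real n + 1) * \<theta> (Suc n) = real n"
    by (simp_all add: \<tau>_def \<theta>_def field_simps)
  define xe where "xe = x n + \<theta> (Suc n) *\<^sub>R (x n - x (n - 1))"
  have step: "F q a + ga \<bullet> (x (Suc n) - a) - (F q (xl (Suc n)) + g' \<bullet> (x (Suc n) - xl (Suc n)))
      = \<tau> (Suc n) * D n - (1 + \<tau> (Suc n)) * D (Suc n) - \<tau> (Suc n) * breg (F q) (gradF q) (xl n) (xl (Suc n))
        + (x (Suc n) - xe) \<bullet> (ga - g')"
    unfolding D_def breg_def ga_def g'_def xe_def
    by (rule extrapolated_linearization_identity) (use xl_rec[of "Suc n"] in simp)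
  have extrapolation: "(x (Suc n) - xe) \<bullet> (ga - g') = dx (Suc n) \<bullet> (ga - g') - \<theta> (Suc n) * (dx n \<bullet> (ga - g) + dx n \<bullet> (g - g'))"
    unfolding dx_def xe_def by (simp add: inner_diff_left inner_diff_right inner_add_left algebra_simps)
  have "lin q (Suc n) (x (Suc n)) = F q (xl (Suc n)) + g' \<bullet> (x (Suc n) - xl (Suc n))"
    using lin_eq_linearization[of "Suc n"] unfolding g'_def by simp
  with step extrapolation have E: "F q a + ga \<bullet> (x (Suc n) - a) - lin q (Suc n) (x (Suc n))
      = \<tau> (Suc n) * D n - (1 + \<tau> (Suc n)) * D (Suc n) - \<tau> (Suc n) * breg (F q) (gradF q) (xl n) (xl (Suc n))
        + dx (Suc n) \<bullet> (ga - g') - \<theta> (Suc n) * (dx n \<bullet> (ga - g) + dx n \<bullet> (g - g'))"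
    by linarith
  have "real (Suc n) * (F q a + ga \<bullet> (x (Suc n) - a) - lin q (Suc n) (x (Suc n)))
      = (real n + 1) * (\<tau> (Suc n) * D n - (1 + \<tau> (Suc n)) * D (Suc n)
          - \<tau> (Suc n) * breg (F q) (gradF q) (xl n) (xl (Suc n)) + dx (Suc n) \<bullet> (ga - g'))
        - ((real n + 1) * \<theta> (Suc n)) * (dx n \<bullet> (ga - g) + dx n \<bullet> (g - g'))"
    unfolding E by (simp add: algebra_simps)
  then show ?thesis
    unfolding \<tau>\<theta> ga_def[symmetric] g_def[symmetric] g'_def[symmetric] by (simp add: field_simps)
qed

lemma agd_estimate:
  assumes "q \<in> P"
  defines "dx t \<equiv> x t - x (t - 1)"
  shows "(\<Sum>t=1..n. real t * (F q a + gradF q a \<bullet> (x t - a) - lin q t (x t)))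
    \<le> - (real n * (real n + 1) / 2 * breg (F q) (gradF q) (xl n) a)
      + real n * (dx n \<bullet> (gradF q a - gradF q (xl n))) + Lf * (\<Sum>t<n. (norm (dx t))\<^sup>2)"
proof (induction n)
  case 0
  then show ?case by simp
next
  case (Suc n)
  have "real n * (dx n \<bullet> (gradF q (xl (Suc n)) - gradF q (xl n)))
      \<le> Lf * (norm (dx n))\<^sup>2 + real n * (real n + 1) / 2 * breg (F q) (gradF q) (xl n) (xl (Suc n))"
    by (rule agd_cross_bound[OF assms(1)])
  then show ?case
    using Suc.IH agd_step_identity[of n q a] unfolding dx_def by (simp add: inner_diff_right algebra_simps)
qed

lemma sum_weights: "(\<Sum>t=1..N. real t) = real N * (real N + 1) / 2"
  using double_gauss_sum_from_Suc_0[of N, where 'a = real] by simp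

lemma xbar_weighted_deviation:
  assumes "N \<ge> 1"
  shows "(\<Sum>t=1..N. real t *\<^sub>R (x t - xbar N)) = 0"
proof -
  have "(\<Sum>t=1..N. real t *\<^sub>R x t) = (\<Sum>t=1..N. real t) *\<^sub>R xbar N"
    unfolding xbar_def using sum_weights_pos[OF assms] by simp
  then show ?thesis by (simp add: scaleR_diff_right sum_subtractf scaleR_sum_left)
qed

lemma weighted_F_xbar_le:
  assumes "q \<in> P" "N \<ge> 1"
  shows "(\<Sum>t=1..N. real t) * F q (xbar N)
    \<le> (\<Sum>t=1..N. real t * lin q t (x t)) + Lf * (\<Sum>t=1..N. (norm (x t - x (t - 1)))\<^sup>2)"
proof -
  define a W where "a = xbar N" and "W = (\<Sum>t=1..N. real t)"
  define dx where "dx t = x t - x (t - 1)" for t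
  have "gradF q a \<bullet> (\<Sum>t=1..N. real t *\<^sub>R (x t - a)) = 0"
    unfolding a_def xbar_weighted_deviation[OF assms(2)] by simp
  then have "(\<Sum>t=1..N. real t * (gradF q a \<bullet> (x t - a))) = 0"
    by (simp add: inner_sum_right)
  moreover have "(\<Sum>t=1..N. real t * (F q a + gradF q a \<bullet> (x t - a) - lin q t (x t)))
      = (\<Sum>t=1..N. real t * F q a) + (\<Sum>t=1..N. real t * (gradF q a \<bullet> (x t - a)))
        - (\<Sum>t=1..N. real t * lin q t (x t))"
    by (simp only: sum.distrib[symmetric] sum_subtractf[symmetric] distrib_left right_diff_distrib)
  ultimately have "(\<Sum>t=1..N. real t * (F q a + gradF q a \<bullet> (x t - a) - lin q t (x t)))
      = W * F q a - (\<Sum>t=1..N. real t * lin q t (x t))"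
    unfolding W_def by (simp add: sum_distrib_right)
  moreover have "(\<Sum>t=1..N. real t * (F q a + gradF q a \<bullet> (x t - a) - lin q t (x t)))
    \<le> - (real N * (real N + 1) / 2 * breg (F q) (gradF q) (xl N) a)
      + real N * (dx N \<bullet> (gradF q a - gradF q (xl N))) + Lf * (\<Sum>t<N. (norm (dx t))\<^sup>2)"
    unfolding dx_def by (rule agd_estimate[OF assms(1)])
  moreover have "real N * (dx N \<bullet> (gradF q a - gradF q (xl N)))
      \<le> Lf * (norm (dx N))\<^sup>2 + real N * (real N + 1) / 2 * breg (F q) (gradF q) (xl N) a"
    by (rule agd_cross_bound[OF assms(1)])
  ultimately have "W * F q a \<le> (\<Sum>t=1..N. real t * lin q t (x t))
      + Lf * ((\<Sum>t<N. (norm (dx t))\<^sup>2) + (norm (dx N))\<^sup>2)"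
    by (simp add: distrib_left)
  also have "(\<Sum>t<N. (norm (dx t))\<^sup>2) + (norm (dx N))\<^sup>2 = (\<Sum>t=1..N. (norm (dx t))\<^sup>2)"
    by (rule sum_lessThan_add_eq_atLeast1_atMost) (simp add: dx_def)
  finally show ?thesis unfolding a_def W_def dx_def .
qed

lemma lin_affine: "lin q t w = (\<Sum>i\<in>UNIV. q $ i *\<^sub>R v t i) \<bullet> w - (\<Sum>i\<in>UNIV. q $ i * c t i)"
  unfolding lin_def by (simp add: inner_sum_left sum_subtractf algebra_simps)

lemma lin_average:
  assumes "t \<ge> 1"
  shows "(\<Sum>s=1..S t. lin q t (y t s)) = real (S t) * lin q t (x t)"
proof -
  define G C where "G = (\<Sum>i\<in>UNIV. q $ i *\<^sub>R v t i)" and "C = (\<Sum>i\<in>UNIV. q $ i * c t i)"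
  have "(\<Sum>s=1..S t. y t s) = real (S t) *\<^sub>R x t" using x_def[OF assms] S_pos[OF assms] by simp
  moreover have "(\<Sum>s=1..S t. lin q t (y t s)) = G \<bullet> (\<Sum>s=1..S t. y t s) - real (S t) * C"
    unfolding lin_affine G_def[symmetric] C_def[symmetric] by (simp add: sum_subtractf inner_sum_right)
  ultimately show ?thesis unfolding lin_affine G_def[symmetric] C_def[symmetric] by (simp add: algebra_simps)
qed

lemma dual_value_le_fstar:
  assumes "t \<ge> 1" "1 \<le> s" "s \<le> S t"
  shows "lin (p t s) t xstar - \<rho>p t s + ustar \<le> fstar"
proof -
  have "ereal (F (p t s) xstar - \<rho>p t s + ustar) \<le> ereal fstar"
    using fobj_lower_bound[OF p_in_P \<rho>_p_finite[OF assms] u_xstar] fobj_xstar assms by simp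
  then show ?thesis using lin_xstar_le[OF assms(1) p_in_P[OF assms(1,3)]] by simp
qed

lemma phase_gap_sum_lower:
  assumes t: "t \<ge> 1"
  defines "Z \<equiv> (norm (xstar - x t))\<^sup>2 + (norm (x t - x (t - 1)))\<^sup>2 - (norm (xstar - x (t - 1)))\<^sup>2"
  shows "real (S t) * (lin q t (x t) - r + ux t - fstar) + \<eta> t / 2 * (real (S t) * Z)
    \<le> (\<Sum>s=1..S t. gap q r t s)"
proof -
  define b where "b = x (t - 1)"
  have "(\<Sum>s=1..S t. lin (p t s) t xstar - \<rho>p t s + ustar) \<le> (\<Sum>s=1..S t. fstar)"
    using dual_value_le_fstar[OF t] by (intro sum_mono) auto
  moreover have "real (S t) * (norm (x t - xstar))\<^sup>2 \<le> (\<Sum>s=1..S t. (norm (y t s - xstar))\<^sup>2)"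
    and "real (S t) * (norm (x t - b))\<^sup>2 \<le> (\<Sum>s=1..S t. (norm (y t s - b))\<^sup>2)"
    by (rule sq_dist_x_le[OF t])+
  then have "\<eta> t / 2 * (real (S t) * Z)
      \<le> \<eta> t / 2 * ((\<Sum>s=1..S t. (norm (y t s - xstar))\<^sup>2) + (\<Sum>s=1..S t. (norm (y t s - b))\<^sup>2)
          - real (S t) * (norm (xstar - b))\<^sup>2)"
    using \<eta>_nonneg unfolding Z_def b_def[symmetric]
    by (intro mult_left_mono) (auto simp: algebra_simps norm_minus_commute)
  moreover have "(\<Sum>s=1..S t. gap q r t s)
      = (\<Sum>s=1..S t. lin q t (y t s)) - real (S t) * r + (\<Sum>s=1..S t. uy t s)
        - (\<Sum>s=1..S t. lin (p t s) t xstar - \<rho>p t s + ustar)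
        + \<eta> t / 2 * ((\<Sum>s=1..S t. (norm (y t s - xstar))\<^sup>2) + (\<Sum>s=1..S t. (norm (y t s - b))\<^sup>2)
          - real (S t) * (norm (xstar - b))\<^sup>2)"
    unfolding gap_def b_def
    by (simp add: sum.distrib sum_subtractf sum_distrib_left norm_minus_commute algebra_simps)
  ultimately show ?thesis
    using lin_average[OF t, of q] u_x(2)[OF t] by (simp add: algebra_simps)
qed

lemma phase_gap_lower:
  assumes t: "t \<ge> 1"
  shows "real t * (lin q t (x t) - r + ux t - fstar)
      + Lf * ((norm (xstar - x t))\<^sup>2 + (norm (x t - x (t - 1)))\<^sup>2 - (norm (xstar - x (t - 1)))\<^sup>2)
    \<le> lam t * (\<Sum>s=1..S t. gap q r t s)"
proof -
  define Z where "Z = (norm (xstar - x t))\<^sup>2 + (norm (x t - x (t - 1)))\<^sup>2 - (norm (xstar - x (t - 1)))\<^sup>2"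
  have lam: "lam t = real t / real (S t)"
    using lam_S[OF t] S_pos[OF t] by (simp add: eq_divide_eq)
  have "real t * (lin q t (x t) - r + ux t - fstar) + Lf * Z
      = lam t * (real (S t) * (lin q t (x t) - r + ux t - fstar) + \<eta> t / 2 * (real (S t) * Z))"
    unfolding lam \<eta>_def using t S_pos[OF t] by (simp add: field_simps)
  also have "\<dots> \<le> lam t * (\<Sum>s=1..S t. gap q r t s)"
    using phase_gap_sum_lower[OF t, of q r] lam_pos[OF t] unfolding Z_def by (intro mult_left_mono) auto
  finally show ?thesis unfolding Z_def .
qed

lemma u_xbar:
  assumes "N \<ge> 1"
  obtains ub where "u (xbar N) = ereal ub" "(\<Sum>t=1..N. real t) * ub \<le> (\<Sum>t=1..N. real t * ux t)"
proof -
  obtain r where "u (xbar N) = ereal r" "r \<le> (\<Sum>t=1..N. real t / (\<Sum>t=1..N. real t) * ux t)"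
    unfolding xbar_eq_average
    by (rule econvex_jensen[OF u_convex u_not_MInf _ _ _ xbar_weights[OF assms]])
      (use sum_weights_pos[OF assms] u_x(1) assms in auto)
  with sum_weights_pos[OF assms] show ?thesis
    by (intro that[of r]) (simp_all add: sum_divide_distrib[symmetric] field_simps)
qed

lemma main_inequality:
  assumes q: "q \<in> P" "\<rho> q = ereal r" and N: "N \<ge> 1" and ub: "u (xbar N) = ereal ub"
  shows "(\<Sum>t=1..N. real t) * (F q (xbar N) - r + ub - fstar) + Lf * (norm (xstar - x N))\<^sup>2
     \<le> Lf * R0\<^sup>2 + DP * R0 / \<Delta>"
proof -
  define W where "W = (\<Sum>t=1..N. real t)"
  define e d where "e t = (norm (xstar - x t))\<^sup>2" and "d t = (norm (x t - x (t - 1)))\<^sup>2" for t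
  have "gap_sum q r N (S N) \<le> DP * R0 / \<Delta>"
    using gap_sum_le_potential[OF q N order.refl] potential_nonneg[OF q(1) N S_pos[OF N] order.refl]
      potential_init_le[OF q(1)] by linarith
  moreover have "gap_sum q r N (S N) = (\<Sum>t=1..N. lam t * (\<Sum>s=1..S t. gap q r t s))"
    unfolding gap_sum_def steps_upto_all[OF N] by (simp add: sum.Sigma[symmetric] sum_distrib_left)
  moreover have "(\<Sum>t=1..N. real t * (lin q t (x t) - r + ux t - fstar) + Lf * (e t + d t - e (t - 1)))
      \<le> (\<Sum>t=1..N. lam t * (\<Sum>s=1..S t. gap q r t s))"
    unfolding e_def d_def by (intro sum_mono phase_gap_lower) auto
  moreover have "(\<Sum>t=1..N. real t * (lin q t (x t) - r + ux t - fstar) + Lf * (e t + d t - e (t - 1)))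
      = (\<Sum>t=1..N. real t * lin q t (x t)) - W * r + (\<Sum>t=1..N. real t * ux t) - W * fstar
        + Lf * (\<Sum>t=1..N. e t - e (t - 1)) + Lf * (\<Sum>t=1..N. d t)"
    unfolding W_def by (simp add: sum.distrib sum_subtractf sum_distrib_left sum_distrib_right algebra_simps)
  moreover have "Lf * (\<Sum>t=1..N. e t - e (t - 1)) = Lf * e N - Lf * e 0"
  proof -
    have "(\<Sum>t=1..N. e t - e (t - 1)) = e N - e 0" by (induction N) auto
    then show ?thesis by (simp add: right_diff_distrib)
  qed
  moreover have "W * F q (xbar N) \<le> (\<Sum>t=1..N. real t * lin q t (x t)) + Lf * (\<Sum>t=1..N. d t)"
    unfolding W_def d_def by (rule weighted_F_xbar_le[OF q(1) N])
  moreover have "W * ub \<le> (\<Sum>t=1..N. real t * ux t)"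
    using u_xbar[OF N] ub unfolding W_def by (metis ereal.inject)
  moreover have "Lf * e 0 \<le> Lf * R0\<^sup>2"
    unfolding e_def using R0_ge Lf_nonneg
    by (intro mult_left_mono power_mono) (auto simp: norm_minus_commute)
  ultimately have "W * F q (xbar N) - W * r + W * ub - W * fstar + Lf * e N \<le> Lf * R0\<^sup>2 + DP * R0 / \<Delta>"
    by linarith
  then have "W * (F q (xbar N) - r + ub - fstar) + Lf * e N \<le> Lf * R0\<^sup>2 + DP * R0 / \<Delta>"
    by (simp add: algebra_simps)
  then show ?thesis unfolding W_def e_def .
qed

lemma fobj_xbar_le:
  assumes N: "N \<ge> 1"
  shows "fobj P f \<rho> u (xbar N)
    \<le> ereal (fstar + (Lf * R0\<^sup>2 + DP * R0 / \<Delta> - Lf * (norm (xstar - x N))\<^sup>2) / (\<Sum>t=1..N. real t))"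
proof -
  define W C where "W = (\<Sum>t=1..N. real t)" and "C = Lf * R0\<^sup>2 + DP * R0 / \<Delta> - Lf * (norm (xstar - x N))\<^sup>2"
  have W: "W > 0" unfolding W_def by (rule sum_weights_pos[OF N])
  obtain ub where ub: "u (xbar N) = ereal ub" using u_xbar[OF N] by metis
  have "fobj P f \<rho> u (xbar N) \<le> ereal ((fstar - ub + C / W) + ub)"
  proof (rule fobj_upper_bound[OF ub])
    fix q r assume q: "q \<in> P" "\<rho> q = ereal r"
    have "W * (F q (xbar N) - r) \<le> W * (fstar - ub) + C"
      using main_inequality[OF q N ub] unfolding W_def C_def by (simp add: algebra_simps)
    then show "F q (xbar N) - r \<le> fstar - ub + C / W"
      using W by (simp add: field_simps)
  qed
  then show ?thesis unfolding W_def C_def by simp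
qed

lemma dist_x_bound:
  assumes "N \<ge> 1"
  shows "Lf * (norm (xstar - x N))\<^sup>2 \<le> Lf * R0\<^sup>2 + DP * R0 / \<Delta>"
proof -
  have "ereal fstar \<le> ereal (fstar + (Lf * R0\<^sup>2 + DP * R0 / \<Delta> - Lf * (norm (xstar - x N))\<^sup>2) / (\<Sum>t=1..N. real t))"
    using fstar_le_fobj[OF xbar_in_X[OF assms]] fobj_xbar_le[OF assms] by (rule order.trans)
  then show ?thesis using sum_weights_pos[OF assms] by (simp add: zero_le_divide_iff)
qed

lemma rate:
  assumes "N \<ge> 1"
  shows "fobj P f \<rho> u (xbar N) - fobj P f \<rho> u xstar
     \<le> ereal (2 * Lf * R0\<^sup>2 / (real N * (real N + 1)) + 2 * DP * R0 / (real N * (real N + 1) * \<Delta>))"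
proof -
  have "(Lf * R0\<^sup>2 + DP * R0 / \<Delta> - Lf * (norm (xstar - x N))\<^sup>2) / (\<Sum>t=1..N. real t)
      \<le> (Lf * R0\<^sup>2 + DP * R0 / \<Delta>) / (real N * (real N + 1) / 2)"
    unfolding sum_weights using Lf_nonneg assms by (intro divide_right_mono) auto
  also have "\<dots> = 2 * Lf * R0\<^sup>2 / (real N * (real N + 1)) + 2 * DP * R0 / (real N * (real N + 1) * \<Delta>)"
  proof -
    have key: "(A + B / D) / (K / 2) = 2 * A / K + 2 * B / (K * D)" if "K > 0" "D > 0" for A B K D :: real
      using that by (simp add: field_simps)
    have "real N * (real N + 1) > 0" using assms by simp
    from key[OF this \<Delta>_pos, of "Lf * R0\<^sup>2" "DP * R0"] show ?thesis by (simp add: mult.assoc)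
  qed
  finally show ?thesis
    using fobj_xbar_le[OF assms] unfolding fobj_xstar
    by (cases "fobj P f \<rho> u (xbar N)") (auto simp: add.commute)
qed

lemma rate_tuned:
  assumes "\<Delta> = DP / (Lf * R0)" "N \<ge> 1"
  shows "fobj P f \<rho> u (xbar N) - fobj P f \<rho> u xstar \<le> ereal (4 * Lf * R0\<^sup>2 / (real N * (real N + 1)))"
proof -
  have DP: "DP = Lf * R0 * \<Delta>" using assms(1) \<Delta>_pos R0_pos by (cases "Lf = 0") (simp_all add: field_simps)
  have "2 * L * R\<^sup>2 / K + 2 * (L * R * D) * R / (K * D) = 4 * L * R\<^sup>2 / K"
    if "K > 0" "D > 0" for L R K D :: real
    using that by (simp add: field_simps power2_eq_square)
  moreover have "real N * (real N + 1) > 0" using assms(2) by simp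
  ultimately have "2 * Lf * R0\<^sup>2 / (real N * (real N + 1)) + 2 * DP * R0 / (real N * (real N + 1) * \<Delta>)
      = 4 * Lf * R0\<^sup>2 / (real N * (real N + 1))"
    unfolding DP using \<Delta>_pos by blast
  then show ?thesis using rate[OF assms(2)] by simp
qed

section \<open>Bounded iterates\<close>

lemma gap_lower_Lf0:
  assumes "Lf = 0" "t \<ge> 1" "1 \<le> s" "s \<le> S t" "q \<in> P"
  shows "F q (y t s) - r + uy t s - fstar \<le> gap q r t s"
proof -
  have "F q (y t s) \<le> lin q t (y t s)"
    using lipschitz_gradient_descent[OF F_has_derivative gradF_lipschitz[OF assms(5)], of "y t s" "xl t"]
      lin_eq_linearization[OF assms(2)] assms(1) by simp
  then show ?thesis
    using dual_value_le_fstar[OF assms(2-4)] assms(1) unfolding gap_def \<eta>_def by simp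
qed

(* For Lf = 0 the main inequality does not control the iterates. Instead, the lam-weighted
   average of the inner iterates up to (t, s) is feasible, and by convexity its gap against
   every q is at most the weighted gap sum, so that sum cannot be uniformly negative. *)
lemma ergodic_gap_nonneg:
  assumes Lf0: "Lf = 0" and t: "t \<ge> 1" "1 \<le> s" "s \<le> S t"
    and bound: "\<And>q r. q \<in> P \<Longrightarrow> \<rho> q = ereal r \<Longrightarrow> gap_sum q r t s \<le> B"
  shows "0 \<le> B"
proof -
  define I :: "(nat \<times> nat) set" where "I = steps_upto t s"
  define \<Lambda> where "\<Lambda> = (\<Sum>i\<in>I. lam (fst i))"
  define w where "w i = lam (fst i) / \<Lambda>" for i :: "nat \<times> nat"
  define yh where "yh = (\<Sum>i\<in>I. w i *\<^sub>R y (fst i) (snd i))"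
  have I: "finite I" "(t, s) \<in> I" unfolding I_def steps_upto_def using finite_steps_upto t by auto
  have I_mem: "1 \<le> fst i \<and> 1 \<le> snd i \<and> snd i \<le> S (fst i)" if "i \<in> I" for i
    using steps_upto_mem[of "fst i" "snd i" t s] that t unfolding I_def by simp
  have \<Lambda>: "0 < \<Lambda>" unfolding \<Lambda>_def using I I_mem lam_pos by (intro sum_pos) auto
  have w: "0 \<le> w i" if "i \<in> I" for i
    unfolding w_def using lam_pos I_mem[OF that] \<Lambda> by (simp add: less_imp_le)
  have w1: "(\<Sum>i\<in>I. w i) = 1" unfolding w_def \<Lambda>_def using \<Lambda> by (simp add: sum_divide_distrib[symmetric] \<Lambda>_def)
  have "yh \<in> X" unfolding yh_def using I_mem y_in_X by (intro convex_sum[OF I(1) X_convex w1 w]) auto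
  have uy_fin: "u (y (fst i) (snd i)) = ereal (uy (fst i) (snd i))" if "i \<in> I" for i
    using I_mem[OF that] by (intro u_y) auto
  obtain uh where uh: "u yh = ereal uh" "uh \<le> (\<Sum>i\<in>I. w i * uy (fst i) (snd i))"
    unfolding yh_def by (rule econvex_jensen[OF u_convex u_not_MInf I(1) _ w w1 uy_fin]) (use I(2) in auto)
  have "0 \<le> B / \<Lambda>"
  proof (rule suboptimality_bound_nonneg[OF \<open>yh \<in> X\<close> uh(1)])
    fix q r assume q: "q \<in> P" "\<rho> q = ereal r"
    have "F q yh \<le> (\<Sum>i\<in>I. w i * F q (y (fst i) (snd i)))"
      unfolding yh_def using I by (intro convex_on_sum[OF _ _ F_convex[OF q(1)] w1 w]) auto
    moreover have "(\<Sum>i\<in>I. w i * (F q (y (fst i) (snd i)) - r + uy (fst i) (snd i) - fstar))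
        \<le> (\<Sum>i\<in>I. w i * gap q r (fst i) (snd i))"
      using gap_lower_Lf0[OF Lf0 _ _ _ q(1)] I_mem w by (intro sum_mono mult_left_mono) auto
    moreover have "(\<Sum>i\<in>I. w i * (F q (y (fst i) (snd i)) - r + uy (fst i) (snd i) - fstar))
        = (\<Sum>i\<in>I. w i * F q (y (fst i) (snd i))) - r + (\<Sum>i\<in>I. w i * uy (fst i) (snd i)) - fstar"
      using w1 by (simp add: algebra_simps sum.distrib sum_subtractf sum_distrib_left[symmetric] sum_distrib_right[symmetric])
    moreover have "(\<Sum>i\<in>I. w i * gap q r (fst i) (snd i)) = gap_sum q r t s / \<Lambda>"
      unfolding gap_sum_def I_def[symmetric] w_def by (simp add: sum_divide_distrib case_prod_beta)
    moreover have "gap_sum q r t s / \<Lambda> \<le> B / \<Lambda>"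
      using bound[OF q] \<Lambda> by (simp add: divide_right_mono)
    ultimately show "F q yh - r \<le> fstar - uh + B / \<Lambda>" using uh(2) by linarith
  qed
  with \<Lambda> show ?thesis by (simp add: zero_le_divide_iff)
qed

lemma y_bounded_Lf0:
  assumes "Lf = 0" "t \<ge> 1" "1 \<le> s" "s \<le> S t"
  shows "norm (y t s - xstar) \<le> max 1 (2 * (DP / \<Delta> + DP * R0 / \<Delta>) / \<kappa>y)"
proof (rule quadratic_le_linear_imp_bounded)
  let ?e = "norm (y t s - xstar)"
  have "0 \<le> DP * R0 / \<Delta> - (\<kappa>y / 2 * ?e\<^sup>2 - DP / \<Delta> * ?e)"
  proof (rule ergodic_gap_nonneg[OF assms])
    fix q r assume "q \<in> P" "\<rho> q = ereal r"
    then show "gap_sum q r t s \<le> DP * R0 / \<Delta> - (\<kappa>y / 2 * ?e\<^sup>2 - DP / \<Delta> * ?e)"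
      using gap_sum_le_potential[OF _ _ assms(2,4)] potential_init_le potential_lower_bound[OF _ assms(2-4)]
      by fastforce
  qed
  then show "\<kappa>y / 2 * ?e\<^sup>2 \<le> DP / \<Delta> * ?e + DP * R0 / \<Delta>" by linarith
qed (use \<kappa>_pos DP_pos R0_pos \<Delta>_pos in simp_all)

lemma x_bounded: "\<exists>R. \<forall>t. norm (x t - xstar) \<le> R"
proof (cases "Lf = 0")
  case True
  define E where "E = max 1 (2 * (DP / \<Delta> + DP * R0 / \<Delta>) / \<kappa>y)"
  have "norm (x t - xstar) \<le> max R0 E" for t
  proof (cases "t = 0")
    case True
    then show ?thesis using R0_ge by simp
  next
    case False
    then have "x t \<in> cball xstar E"
      using y_bounded_Lf0[OF \<open>Lf = 0\<close>] unfolding E_def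
      by (intro x_in_convex) (auto simp: dist_norm norm_minus_commute)
    then show ?thesis by (simp add: dist_norm norm_minus_commute)
  qed
  then show ?thesis by blast
next
  case False
  then have Lf: "Lf > 0" using Lf_nonneg by simp
  have "norm (x t - xstar) \<le> max R0 (sqrt ((Lf * R0\<^sup>2 + DP * R0 / \<Delta>) / Lf))" for t
  proof (cases "t = 0")
    case True
    then show ?thesis using R0_ge by simp
  next
    case False
    then have "(norm (x t - xstar))\<^sup>2 \<le> (Lf * R0\<^sup>2 + DP * R0 / \<Delta>) / Lf"
      using dist_x_bound[of t] Lf by (simp add: field_simps norm_minus_commute)
    then have "norm (x t - xstar) \<le> sqrt ((Lf * R0\<^sup>2 + DP * R0 / \<Delta>) / Lf)" by (rule real_le_rsqrt)
    then show ?thesis by simp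
  qed
  then show ?thesis by blast
qed

lemma xl_bounded:
  assumes R: "\<And>t. norm (x t - xstar) \<le> R"
  shows "xl t \<in> cball xstar (3 * R)"
proof (induction t)
  case 0
  have "0 \<le> R" using R[of 0] norm_ge_zero order_trans by blast
  then show ?case using R[of 0] by (simp add: xl0 dist_norm norm_minus_commute)
next
  case (Suc t)
  define \<theta>' \<tau>' where "\<theta>' = \<theta> (Suc t)" and "\<tau>' = \<tau> (Suc t)"
  define xe where "xe = x t + \<theta>' *\<^sub>R (x t - x (t - 1))"
  have \<theta>': "0 \<le> \<theta>'" "\<theta>' \<le> 1" and \<tau>': "0 \<le> \<tau>'" by (simp_all add: \<theta>'_def \<tau>'_def \<theta>_def \<tau>_def)
  have "0 \<le> R" using R[of 0] norm_ge_zero order_trans by blast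
  have "norm (xe - xstar) \<le> norm ((1 + \<theta>') *\<^sub>R (x t - xstar)) + norm (\<theta>' *\<^sub>R (x (t - 1) - xstar))"
    unfolding xe_def by (rule order_trans[OF _ norm_triangle_ineq4]) (simp add: algebra_simps)
  also have "\<dots> = (1 + \<theta>') * norm (x t - xstar) + \<theta>' * norm (x (t - 1) - xstar)"
    using \<theta>' by simp
  also have "\<dots> \<le> (1 + \<theta>') * R + \<theta>' * R"
    using R[of t] R[of "t - 1"] \<theta>' by (intro add_mono mult_left_mono) auto
  also have "\<dots> \<le> 3 * R"
    using mult_left_le_one_le[OF \<open>0 \<le> R\<close> \<theta>'] by (simp add: algebra_simps)
  finally have xe: "xe \<in> cball xstar (3 * R)" by (simp add: dist_norm norm_minus_commute)
  have xl_eq: "xl (Suc t) = (1 / (1 + \<tau>')) *\<^sub>R xe + (\<tau>' / (1 + \<tau>')) *\<^sub>R xl t"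
    using xl_def[of "Suc t"] unfolding xe_def \<theta>'_def \<tau>'_def by (simp add: scaleR_add_right)
  have "1 / (1 + \<tau>') + \<tau>' / (1 + \<tau>') = 1" using \<tau>' by (simp add: field_simps)
  then show ?case
    unfolding xl_eq using xe Suc.IH \<tau>' by (intro convexD[OF convex_cball]) auto
qed

lemma M_bounded: "\<exists>Mtil. \<forall>t\<ge>1. M t \<le> Mtil"
proof -
  obtain R where R: "\<And>t. norm (x t - xstar) \<le> R" using x_bounded by blast
  obtain Lc where Lc: "\<And>i. (Lc i)-lipschitz_on UNIV (fg i)" using f_lip by metis
  obtain C where C: "0 \<le> C" "\<And>V :: 'm \<Rightarrow> real^'n. Mconst NU V \<le> C * (\<Sum>i\<in>UNIV. norm (V i))"
    by (rule Mconst_le_sum_norm[OF NU_norm]) blast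
  have "M t \<le> C * (\<Sum>i\<in>UNIV. norm (fg i xstar) + Lc i * (3 * R))" if "t \<ge> 1" for t
  proof -
    have "norm (v t i) \<le> norm (fg i xstar) + Lc i * (3 * R)" for i
    proof -
      have "norm (fg i (xl t) - fg i xstar) \<le> Lc i * norm (xl t - xstar)"
        using lipschitz_onD[OF Lc[of i], of "xl t" xstar] by (simp add: dist_norm)
      also have "\<dots> \<le> Lc i * (3 * R)"
        using xl_bounded[OF R, of t] lipschitz_on_nonneg[OF Lc[of i]]
        by (intro mult_left_mono) (auto simp: dist_norm norm_minus_commute)
      finally show ?thesis
        using that norm_triangle_ineq2[of "fg i (xl t)" "fg i xstar"] unfolding v_def by simp
    qed
    then have "C * (\<Sum>i\<in>UNIV. norm (v t i)) \<le> C * (\<Sum>i\<in>UNIV. norm (fg i xstar) + Lc i * (3 * R))"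
      using C(1) by (intro mult_left_mono sum_mono) auto
    then show ?thesis using C(2)[of "v t"] unfolding M_def by linarith
  qed
  then show ?thesis by blast
qed

end

theorem theorem4p1:
  fixes X :: "(real^'n::finite) set"
    and P :: "(real^'m::finite) set"
    and \<rho> :: "real^'m \<Rightarrow> ereal"
    and u :: "real^'n \<Rightarrow> ereal"
    and f :: "'m \<Rightarrow> real^'n \<Rightarrow> real"
    and fg :: "'m \<Rightarrow> real^'n \<Rightarrow> real^'n"
    and NU :: "real^'m \<Rightarrow> real"
    and \<omega> :: "real^'m \<Rightarrow> real"
    and g\<omega> :: "real^'m \<Rightarrow> real^'m"
    and xstar :: "real^'n"
    and pinit :: "real^'m"
    and R0 \<Delta> Lf DP :: real
    and v :: "nat \<Rightarrow> 'm \<Rightarrow> real^'n"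
    and c :: "nat \<Rightarrow> 'm \<Rightarrow> real"
    and M Mb \<beta> \<gamma> \<eta> \<theta> \<tau> :: "nat \<Rightarrow> real"
    and S :: "nat \<Rightarrow> nat"
    and \<delta> :: "nat \<Rightarrow> nat \<Rightarrow> real"
    and x xl xbar :: "nat \<Rightarrow> real^'n"
    and y :: "nat \<Rightarrow> nat \<Rightarrow> real^'n"
    and vt :: "nat \<Rightarrow> nat \<Rightarrow> real^'n"
    and p :: "nat \<Rightarrow> nat \<Rightarrow> real^'m"
    and pm1 :: "nat \<Rightarrow> real^'m"
  \<comment> \<open>problem data\<close>
  assumes X_closed: "closed X" and X_convex: "convex X"
    and P_closed: "closed P" and P_convex: "convex P" and P_simplex: "P \<subseteq> prob_simplex"
    and \<rho>_proper: "eproper_on P \<rho>" and \<rho>_closed: "eclosed_on P \<rho>" and \<rho>_convex: "econvex_on P \<rho>"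
    and u_proper: "eproper_on UNIV u" and u_closed: "eclosed_on UNIV u" and u_convex: "econvex_on UNIV u"
    and f_convex: "\<And>i. convex_on UNIV (f i)"
    and f_grad: "\<And>i z. (f i has_derivative (\<lambda>h. fg i z \<bullet> h)) (at z)"
    and f_lip: "\<And>i. \<exists>L. L-lipschitz_on UNIV (fg i)"
    and Lf_def: "Lf = Sup ((\<lambda>q. lip_const (\<lambda>z. \<Sum>i\<in>UNIV. (q $ i) *\<^sub>R fg i z)) ` P)"
  \<comment> \<open>optimal solution (with finite optimal value)\<close>
    and xstar_in: "xstar \<in> X"
    and xstar_opt: "\<And>z. z \<in> X \<Longrightarrow> fobj P f \<rho> u xstar \<le> fobj P f \<rho> u z"
    and fstar_fin: "fobj P f \<rho> u xstar < \<infinity>"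
  \<comment> \<open>Bregman distance on P, 1-strongly convex w.r.t. the norm NU\<close>
    and NU_norm: "is_norm NU"
    and \<omega>_diff: "\<And>q. q \<in> P \<Longrightarrow> (\<omega> has_derivative (\<lambda>h. g\<omega> q \<bullet> h)) (at q within P)"
    and \<omega>_strong: "\<And>q q'. q \<in> P \<Longrightarrow> q' \<in> P \<Longrightarrow>
                     \<omega> q \<ge> \<omega> q' + g\<omega> q' \<bullet> (q - q') + (NU (q - q'))\<^sup>2 / 2"
    and DP_bdd: "bdd_above {sqrt (2 * breg \<omega> g\<omega> q q') | q q'. q \<in> P \<and> q' \<in> P}"
    and DP_def: "DP = Sup {sqrt (2 * breg \<omega> g\<omega> q q') | q q'. q \<in> P \<and> q' \<in> P}"
    and DP_pos: "DP > 0"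
  \<comment> \<open>initialization\<close>
    and x0_in: "x 0 \<in> X" and pinit_in: "pinit \<in> P"
    and R0_pos: "R0 > 0" and R0_ge: "R0 \<ge> norm (x 0 - xstar)"
  \<comment> \<open>stepsizes\<close>
    and \<Delta>_pos: "\<Delta> > 0"
    and \<theta>_def: "\<And>t. \<theta> t = (real t - 1) / real t"
    and \<tau>_def: "\<And>t. \<tau> t = (real t - 1) / 2"
    and \<eta>_def: "\<And>t. \<eta> t = 2 * Lf / real t"
    and M_def: "\<And>t. M t = Mconst NU (v t)"
    and M_pos: "\<And>t. t \<ge> 1 \<Longrightarrow> M t > 0"
    and S_def: "\<And>t. S t = nat \<lceil>real t * \<Delta> * M t\<rceil>"
    and Mb_def: "\<And>t. Mb t = real (S t) / (real t * \<Delta>)"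
    and \<beta>_def: "\<And>t. \<beta> t = DP * Mb t / R0"
    and \<gamma>_def: "\<And>t. \<gamma> t = R0 * Mb t / DP"
    and \<delta>_def: "\<And>t s. \<delta> t s = (if s = 1 then (if t = 1 then 1 else Mb t / Mb (t - 1)) else 1)"
  \<comment> \<open>the smooth DRAO-S method (q_s^t = 1, w_t = t)\<close>
    and xl0: "xl 0 = x 0"
    and xl_def: "\<And>t. t \<ge> 1 \<Longrightarrow>
        xl t = (1 / (1 + \<tau> t)) *\<^sub>R ((x (t - 1) + \<theta> t *\<^sub>R (x (t - 1) - x (t - 2))) + \<tau> t *\<^sub>R xl (t - 1))"
    and v_def: "\<And>t i. v t i = fg i (xl (if t = 0 then 1 else t))"
    and c_def: "\<And>t i. c t i = xl t \<bullet> v t i - f i (xl t)"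
    and y10: "y 1 0 = x 0" and p10: "p 1 0 = pinit" and pm11: "pm1 1 = pinit"
    and yt0: "\<And>t. t \<ge> 2 \<Longrightarrow> y t 0 = y (t - 1) (S (t - 1))"
    and pt0: "\<And>t. t \<ge> 2 \<Longrightarrow> p t 0 = p (t - 1) (S (t - 1))"
    and pm1t: "\<And>t. t \<ge> 2 \<Longrightarrow> pm1 t = p (t - 1) (S (t - 1) - 1)"
    and vt_def: "\<And>t s. t \<ge> 1 \<Longrightarrow> 1 \<le> s \<Longrightarrow> s \<le> S t \<Longrightarrow>
        vt t s = (\<Sum>i\<in>UNIV. (p t (s - 1) $ i) *\<^sub>R v t i)
               + \<delta> t s *\<^sub>R (\<Sum>i\<in>UNIV. (p t (s - 1) $ i - (if s = 1 then pm1 t else p t (s - 2)) $ i)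
                                         *\<^sub>R v (if s = 1 then t - 1 else t) i)"
    and y_step: "\<And>t s. t \<ge> 1 \<Longrightarrow> 1 \<le> s \<Longrightarrow> s \<le> S t \<Longrightarrow>
        y t s \<in> X \<and> (\<forall>z\<in>X.
          ereal (y t s \<bullet> vt t s) + u (y t s)
            + ereal (\<beta> t / 2 * (norm (y t s - y t (s - 1)))\<^sup>2 + \<eta> t / 2 * (norm (y t s - x (t - 1)))\<^sup>2)
          \<le> ereal (z \<bullet> vt t s) + u z
            + ereal (\<beta> t / 2 * (norm (z - y t (s - 1)))\<^sup>2 + \<eta> t / 2 * (norm (z - x (t - 1)))\<^sup>2))"
    and p_step: "\<And>t s. t \<ge> 1 \<Longrightarrow> 1 \<le> s \<Longrightarrow> s \<le> S t \<Longrightarrow>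
        p t s \<in> P \<and> (\<forall>q\<in>P.
          ereal (\<Sum>i\<in>UNIV. q $ i * (v t i \<bullet> y t s - c t i)) - \<rho> q
            - ereal (\<gamma> t * breg \<omega> g\<omega> q (p t (s - 1)))
          \<le> ereal (\<Sum>i\<in>UNIV. p t s $ i * (v t i \<bullet> y t s - c t i)) - \<rho> (p t s)
            - ereal (\<gamma> t * breg \<omega> g\<omega> (p t s) (p t (s - 1))))"
    and x_def: "\<And>t. t \<ge> 1 \<Longrightarrow> x t = (1 / real (S t)) *\<^sub>R (\<Sum>s=1..S t. y t s)"
    and xbar_def: "\<And>N. xbar N = (1 / (\<Sum>t=1..N. real t)) *\<^sub>R (\<Sum>t=1..N. real t *\<^sub>R x t)"
  shows "(\<forall>N\<ge>1. fobj P f \<rho> u (xbar N) - fobj P f \<rho> u xstar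
            \<le> ereal (2 * Lf * R0\<^sup>2 / (real N * (real N + 1)) + 2 * DP * R0 / (real N * (real N + 1) * \<Delta>)))
       \<and> (\<exists>Mtil. \<forall>t\<ge>1. M t \<le> Mtil)
       \<and> (\<Delta> = DP / (Lf * R0) \<longrightarrow>
            (\<forall>N\<ge>1. fobj P f \<rho> u (xbar N) - fobj P f \<rho> u xstar
               \<le> ereal (4 * Lf * R0\<^sup>2 / (real N * (real N + 1)))))"
proof -
  interpret drao_s X P \<rho> u f fg Lf xstar NU \<omega> g\<omega> pinit R0 \<Delta> DP v c M Mb \<beta> \<gamma> \<eta> \<theta> \<tau> S \<delta> x xl xbar y vt p pm1
    by unfold_locales (fact assms)+
  show ?thesis
    using rate rate_tuned M_bounded by blast
qed

end
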